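(* Let $f$ be smooth and bistable (there is $\alpha\in(0,1)$ with $f(0)=f(\alpha)=f(1)=0$, $f'(0),f'(1)<0<f'(\alpha)$, $f>0$ on $(-\infty,0)\cup(\alpha,1)$, $f<0$ on $(0,\alpha)\cup(1,\infty)$), $\tau_m=1/\sup_{[0,1]}|f'|$, $\tau\in(0,\tau_m)$, and let $c=c_\ast(\tau)$, $(U,V)$ be the traveling wave speed and profile ($cU'+V'+f(U)=0$, $U'+c\tau V'-V=0$, $(U,V)(-\infty)=(0,0)$, $(U,V)(+\infty)=(1,0)$). Put $a(x)=f'(U(x))$, $a_0=1-c^2\tau$, $a_1(x)=c(1-\tau a(x))$, $a_2(x)=a(x)-c\tau a'(x)$, and $$\mathbf{A}^\tau(x,0)=\frac{1}{1-c^2\tau}\begin{pmatrix}0&1-c^2\tau\\ c\tau a'(x)-a(x)& c(\tau a(x)-1)\end{pmatrix}.$$ Then the adjoint equation $\mathbf{y}_x=-\mathbf{A}^\tau(x,0)^*\mathbf{y}$ has a unique (up to constant multiples) bounded solution $\mathbf{y}_0=(\zeta,\eta)^\top\in H^1(\mathbb{R};\mathbb{C}^2)$, where $\eta\in H^2(\mathbb{R};\mathbb{C})$ is the unique (up to constant multiples) bounded solution of $$\mathcal{A}^*\eta:=a_0\eta_{xx}-a_1(x)\eta_x+(a_2(x)-a_1'(x))\eta=0,$$ $\mathcal{A}^*:H^2(\mathbb{R};\mathbb{C})\to L^2(\mathbb{R};\mathbb{C})$ being the formal adjoint of $\mathcal{A}u:=a_0u_{xx}+a_1(x)u_x+a_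2(x)u$.
   Context: $\mathbf{A}^*$ denotes the conjugate transpose. The system $\mathbf{w}_x=\mathbf{A}^\tau(x,0)\mathbf{w}$, $\mathbf{w}=(u,u_x)$, is the first-order form of the zero-eigenvalue problem for the linearization of $u_t=v_x+f(u)$, $\tau v_t=u_x-v$ around the wave. *)

theory Defs
  imports "HOL-Analysis.Analysis"
begin

definition smooth_fun :: "(real \<Rightarrow> real) \<Rightarrow> bool" where
  "smooth_fun g \<longleftrightarrow> (\<forall>n x. ((deriv ^^ n) g) differentiable (at x))"

definition bistable :: "(real \<Rightarrow> real) \<Rightarrow> bool" where
  "bistable f \<longleftrightarrow> (\<exists>\<alpha>. 0 < \<alpha> \<and> \<alpha> < 1 \<and>
      f 0 = 0 \<and> f \<alpha> = 0 \<and> f 1 = 0 \<and>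
      deriv f 0 < 0 \<and> deriv f 1 < 0 \<and> 0 < deriv f \<alpha> \<and>
      (\<forall>s. (s < 0 \<or> (\<alpha> < s \<and> s < 1)) \<longrightarrow> f s > 0) \<and>
      (\<forall>s. ((0 < s \<and> s < \<alpha>) \<or> 1 < s) \<longrightarrow> f s < 0))"

definition tau_m :: "(real \<Rightarrow> real) \<Rightarrow> real" where
  "tau_m f = 1 / (SUP s\<in>{0..1}. \<bar>deriv f s\<bar>)"

text \<open>Traveling wave (c,U,V) of u_t = v_x + f(u), tau v_t = u_x - v:
  c U' + V' + f(U) = 0, U' + c tau V' - V = 0, (U,V)(-inf)=(0,0), (U,V)(+inf)=(1,0).\<close>
definition traveling_wave ::
  "(real \<Rightarrow> real) \<Rightarrow> real \<Rightarrow> real \<Rightarrow> (real \<Rightarrow> real) \<Rightarrow> (real \<Rightarrow> real) \<Rightarrow> bool" where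
  "traveling_wave f \<tau> c U V \<longleftrightarrow>
     (\<forall>x. U differentiable (at x) \<and> V differentiable (at x)) \<and>
     (\<forall>x. c * deriv U x + deriv V x + f (U x) = 0) \<and>
     (\<forall>x. deriv U x + c * \<tau> * deriv V x - V x = 0) \<and>
     (U \<longlongrightarrow> 0) at_bot \<and> (V \<longlongrightarrow> 0) at_bot \<and>
     (U \<longlongrightarrow> 1) at_top \<and> (V \<longlongrightarrow> 0) at_top"

definition coef_a :: "(real \<Rightarrow> real) \<Rightarrow> (real \<Rightarrow> real) \<Rightarrow> real \<Rightarrow> real" where
  "coef_a f U x = deriv f (U x)"

definition coef_a0 :: "real \<Rightarrow> real \<Rightarrow> real" where
  "coef_a0 \<tau> c = 1 - c\<^sup>2 * \<tau>"

definition coef_a1 :: "(real \<Rightarrow> real) \<Rightarrow> real \<Rightarrow> real \<Rightarrow> (real \<Rightarrow> real) \<Rightarrow> real \<Rightarrow> real" where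
  "coef_a1 f \<tau> c U x = c * (1 - \<tau> * coef_a f U x)"

definition coef_a2 :: "(real \<Rightarrow> real) \<Rightarrow> real \<Rightarrow> real \<Rightarrow> (real \<Rightarrow> real) \<Rightarrow> real \<Rightarrow> real" where
  "coef_a2 f \<tau> c U x = coef_a f U x - c * \<tau> * deriv (coef_a f U) x"

definition A_mat :: "(real \<Rightarrow> real) \<Rightarrow> real \<Rightarrow> real \<Rightarrow> (real \<Rightarrow> real) \<Rightarrow> real \<Rightarrow> complex^2^2" where
  "A_mat f \<tau> c U x = (1 / (1 - c\<^sup>2 * \<tau>)) *\<^sub>R
     (\<chi> i j. complex_of_real
        (if i = 1 then (if j = 1 then 0 else 1 - c\<^sup>2 * \<tau>)
         else (if j = 1 then c * \<tau> * deriv (coef_a f U) x - coef_a f U x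
               else c * (\<tau> * coef_a f U x - 1))))"

definition conj_transpose :: "complex^'n^'m \<Rightarrow> complex^'m^'n" where
  "conj_transpose M = (\<chi> i j. cnj (M $ j $ i))"

definition adjoint_sol ::
  "(real \<Rightarrow> real) \<Rightarrow> real \<Rightarrow> real \<Rightarrow> (real \<Rightarrow> real) \<Rightarrow> (real \<Rightarrow> complex^2) \<Rightarrow> bool" where
  "adjoint_sol f \<tau> c U y \<longleftrightarrow>
     (\<forall>x. (y has_vector_derivative (- (conj_transpose (A_mat f \<tau> c U x) *v y x))) (at x))"

definition Astar_sol ::
  "(real \<Rightarrow> real) \<Rightarrow> real \<Rightarrow> real \<Rightarrow> (real \<Rightarrow> real) \<Rightarrow> (real \<Rightarrow> complex) \<Rightarrow> bool" where
  "Astar_sol f \<tau> c U \<eta> \<longleftrightarrow>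
     (\<exists>\<eta>1 \<eta>2. \<forall>x. (\<eta> has_vector_derivative \<eta>1 x) (at x) \<and>
        (\<eta>1 has_vector_derivative \<eta>2 x) (at x) \<and>
        complex_of_real (coef_a0 \<tau> c) * \<eta>2 x
        - complex_of_real (coef_a1 f \<tau> c U x) * \<eta>1 x
        + complex_of_real (coef_a2 f \<tau> c U x - deriv (coef_a1 f \<tau> c U) x) * \<eta> x = 0)"

definition L2 :: "(real \<Rightarrow> 'a::{banach,second_countable_topology}) \<Rightarrow> bool" where
  "L2 g \<longleftrightarrow> g \<in> borel_measurable lborel \<and> integrable lborel (\<lambda>x. (norm (g x))\<^sup>2)"

definition test_fun :: "(real \<Rightarrow> real) \<Rightarrow> bool" where
  "test_fun \<phi> \<longleftrightarrow> smooth_fun \<phi> \<and> compact (closure {x. \<phi> x \<noteq> 0})"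

definition weak_deriv ::
  "(real \<Rightarrow> 'a::{banach,second_countable_topology}) \<Rightarrow> (real \<Rightarrow> 'a) \<Rightarrow> bool" where
  "weak_deriv g h \<longleftrightarrow> (\<forall>\<phi>. test_fun \<phi> \<longrightarrow>
      (LINT x|lborel. deriv \<phi> x *\<^sub>R g x) = - (LINT x|lborel. \<phi> x *\<^sub>R h x))"

definition H1 :: "(real \<Rightarrow> 'a::{banach,second_countable_topology}) \<Rightarrow> bool" where
  "H1 g \<longleftrightarrow> L2 g \<and> (\<exists>g1. L2 g1 \<and> weak_deriv g g1)"

definition H2 :: "(real \<Rightarrow> 'a::{banach,second_countable_topology}) \<Rightarrow> bool" where
  "H2 g \<longleftrightarrow> L2 g \<and> (\<exists>g1 g2. L2 g1 \<and> L2 g2 \<and> weak_deriv g g1 \<and> weak_deriv g1 g2)"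

end

theory Submission
  imports Defs
begin

text \<open>The derivative \<open>U'\<close> of the wave lies in the kernel of the linearised operator \<open>\<A>\<close>. With
  the integrating factor \<open>W = exp (\<integral> a\<^sub>1 / a\<^sub>0)\<close>, the pair \<open>(\<zeta>, \<eta>) = (- W U'', W U')\<close> solves the
  adjoint system, and \<open>\<eta>\<close> solves \<open>\<A>\<^sup>*\<eta> = 0\<close>. Since \<open>f'(0), f'(1) < 0\<close> and \<open>a\<^sub>0 > 0\<close>, the
  linearised equation has a saddle at both ends, so \<open>U'\<close> and \<open>U''\<close> decay at the stable rate, which
  beats the growth of \<open>W\<close>: \<open>(\<zeta>, \<eta>)\<close> decays exponentially, whence the Sobolev regularity.
  For any solution \<open>(z\<^sub>1, z\<^sub>2)\<close> of the adjoint system the pairing \<open>U' z\<^sub>1 + U'' z\<^sub>2\<close> is constant.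
  For bounded solutions it tends to zero at \<open>+\<infinity>\<close>, and uniqueness for linear systems makes
  \<open>(z\<^sub>1, z\<^sub>2)\<close> a multiple of \<open>(\<zeta>, \<eta>)\<close>. The sign \<open>a\<^sub>0 = 1 - c\<^sup>2\<tau> > 0\<close> comes from the wave itself:
  \<open>a\<^sub>0 = 0\<close> would reduce it to a first-order equation with the equilibrium \<open>\<alpha>\<close>, and \<open>a\<^sub>0 < 0\<close>
  would make the end state it moves into repelling.\<close>

section \<open>Differential inequalities and uniqueness\<close>

lemma growth_le_exp:
  fixes G G' :: "real \<Rightarrow> real"
  assumes "X \<le> x" "\<And>t. X \<le> t \<Longrightarrow> t \<le> x \<Longrightarrow> (G has_real_derivative G' t) (at t)"
    "\<And>t. X \<le> t \<Longrightarrow> t \<le> x \<Longrightarrow> G' t \<le> k * G t"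
  shows "G x \<le> G X * exp (k * (x - X))"
proof -
  have "(\<lambda>t. G t * exp (- k * t)) x \<le> (\<lambda>t. G t * exp (- k * t)) X"
  proof (rule DERIV_nonpos_imp_nonincreasing[OF assms(1)])
    fix t assume t: "X \<le> t" "t \<le> x"
    have "((\<lambda>t. G t * exp (- k * t)) has_real_derivative
        G' t * exp (- k * t) + G t * (exp (- k * t) * (- k))) (at t)"
      by (auto intro!: derivative_eq_intros assms(2) t)
    moreover have "G' t * exp (- k * t) \<le> k * G t * exp (- k * t)"
      using assms(3)[OF t] by (simp add: mult_right_mono)
    ultimately show "\<exists>y. ((\<lambda>t. G t * exp (- k * t)) has_real_derivative y) (at t) \<and> y \<le> 0"
      by (intro exI[of _ "G' t * exp (- k * t) + G t * (exp (- k * t) * (- k))"]) (simp add: algebra_simps)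
  qed
  then have "G x * exp (- k * x) * exp (k * x) \<le> G X * exp (- k * X) * exp (k * x)"
    by (simp add: mult_right_mono)
  moreover have "exp (- k * x) * exp (k * x) = 1" by (simp flip: exp_add)
  moreover have "exp (- k * X) * exp (k * x) = exp (k * (x - X))"
    by (simp add: algebra_simps flip: exp_add)
  ultimately show ?thesis by (metis mult.assoc mult.right_neutral)
qed

lemma growth_ge_exp:
  fixes G G' :: "real \<Rightarrow> real"
  assumes "X \<le> x" "\<And>t. X \<le> t \<Longrightarrow> t \<le> x \<Longrightarrow> (G has_real_derivative G' t) (at t)"
    "\<And>t. X \<le> t \<Longrightarrow> t \<le> x \<Longrightarrow> G' t \<ge> k * G t"
  shows "G x \<ge> G X * exp (k * (x - X))"
proof -
  have "- G x \<le> - G X * exp (k * (x - X))"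
    by (rule growth_le_exp[of X x "\<lambda>t. - G t" "\<lambda>t. - G' t" k])
       (auto intro!: derivative_eq_intros assms)
  then show ?thesis by simp
qed

lemma nonpos_if_growing_and_tendsto_zero:
  fixes F F' :: "real \<Rightarrow> real"
  assumes der: "\<And>x. X \<le> x \<Longrightarrow> (F has_real_derivative F' x) (at x)"
    and grow: "\<And>x. X \<le> x \<Longrightarrow> k * F x \<le> F' x" and "k > 0"
    and lim: "(F \<longlongrightarrow> 0) at_top" and "X \<le> x"
  shows "F x \<le> 0"
proof (rule ccontr)
  assume "\<not> F x \<le> 0"
  then have pos: "F x > 0" by simp
  obtain N where N: "\<And>y. N \<le> y \<Longrightarrow> F y < F x"
    using order_tendstoD(2)[OF lim pos] by (auto simp: eventually_at_top_linorder)
  define y where "y = max N x"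
  have "F x * exp (k * (y - x)) \<le> F y"
    by (rule growth_ge_exp[where G' = F']) (use der grow \<open>X \<le> x\<close> in \<open>auto simp: y_def\<close>)
  moreover have "1 \<le> exp (k * (y - x))" using \<open>k > 0\<close> by (simp add: y_def)
  then have "F x * 1 \<le> F x * exp (k * (y - x))" using pos by (intro mult_left_mono) auto
  ultimately have "F x \<le> F y" by linarith
  then show False using N[of y] by (simp add: y_def)
qed

lemma vanishing_near_zero:
  fixes E E' :: "real \<Rightarrow> real"
  assumes der: "\<And>t. (E has_real_derivative E' t) (at t)" and nonneg: "\<And>t. E t \<ge> 0"
    and zero: "E x = 0" and "r > 0" and bound: "\<And>t. \<bar>t - x\<bar> < r \<Longrightarrow> \<bar>E' t\<bar> \<le> L * E t"
    and t: "\<bar>t - x\<bar> < r"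
  shows "E t = 0"
proof (cases "x \<le> t")
  case True
  have "E t \<le> E x * exp (L * (t - x))"
    by (rule growth_le_exp[OF True der]) (use bound t in \<open>auto simp: abs_le_iff\<close>)
  then show ?thesis using zero nonneg[of t] by simp
next
  case False
  have "(\<lambda>s. E (- s)) (- t) \<le> (\<lambda>s. E (- s)) (- x) * exp (L * (- t - (- x)))"
  proof (rule growth_le_exp[of "- x" "- t" _ "\<lambda>s. - E' (- s)"])
    fix s assume s: "- x \<le> s" "s \<le> - t"
    show "((\<lambda>s. E (- s)) has_real_derivative - E' (- s)) (at s)"
      using DERIV_chain2[OF der DERIV_minus[OF DERIV_ident]] by simp
    have "\<bar>- s - x\<bar> < r" using s t False by auto
    then show "- E' (- s) \<le> L * E (- s)" using bound[of "- s"] by (auto simp: abs_le_iff)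
  qed (use False in auto)
  then show ?thesis using zero nonneg[of t] by simp
qed

text \<open>The zero set of \<open>E\<close> is open by the previous lemma and closed by continuity.\<close>

lemma vanishing_everywhere:
  fixes E E' :: "real \<Rightarrow> real"
  assumes der: "\<And>t. (E has_real_derivative E' t) (at t)" and nonneg: "\<And>t. E t \<ge> 0"
    and "E x0 = 0"
    and local_bound: "\<And>x. E x = 0 \<Longrightarrow> \<exists>r>0. \<exists>L. \<forall>t. \<bar>t - x\<bar> < r \<longrightarrow> \<bar>E' t\<bar> \<le> L * E t"
  shows "E x = 0"
proof -
  let ?S = "{x. E x = 0}"
  have "continuous_on UNIV E"
    using der by (meson DERIV_continuous continuous_at_imp_continuous_on)
  from closed_Collect_eq[OF this continuous_on_const] have "closed ?S" by simp
  moreover have "open ?S"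
  proof (rule openI)
    fix x assume "x \<in> ?S"
    then obtain r L where "r > 0" and r: "\<And>t. \<bar>t - x\<bar> < r \<Longrightarrow> \<bar>E' t\<bar> \<le> L * E t"
      using local_bound by blast
    have "t \<in> ?S" if "t \<in> ball x r" for t
    proof -
      have "\<bar>t - x\<bar> < r" using that by (simp add: dist_real_def abs_minus_commute)
      moreover have "E x = 0" using \<open>x \<in> ?S\<close> by simp
      ultimately show ?thesis using vanishing_near_zero[OF der nonneg _ \<open>r > 0\<close> r] by blast
    qed
    then have "ball x r \<subseteq> ?S" by blast
    then show "\<exists>e>0. ball x e \<subseteq> ?S" using \<open>r > 0\<close> by blast
  qed
  ultimately have "?S = {} \<or> ?S = UNIV" using clopen[of ?S] by simp
  then show ?thesis using \<open>E x0 = 0\<close> by auto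
qed

lemma continuous_bounded_near:
  fixes m :: "real \<Rightarrow> real"
  assumes "continuous_on UNIV m"
  shows "\<exists>M. \<forall>t. \<bar>t - x\<bar> < 1 \<longrightarrow> \<bar>m t\<bar> \<le> M"
proof -
  have "compact (m ` cball x 1)"
    by (rule compact_continuous_image[OF continuous_on_subset[OF assms]]) auto
  then obtain M where M: "\<And>y. y \<in> m ` cball x 1 \<Longrightarrow> norm y \<le> M"
    using compact_imp_bounded bounded_iff by metis
  have "\<bar>m t\<bar> \<le> M" if "\<bar>t - x\<bar> < 1" for t
    using M[of "m t"] that by (simp add: dist_real_def abs_minus_commute)
  then show ?thesis by blast
qed

lemma abs_quadratic_derivative_le:
  fixes u v m11 m12 m21 m22 M :: real
  assumes "\<bar>m11\<bar> + \<bar>m12\<bar> + \<bar>m21\<bar> + \<bar>m22\<bar> \<le> M"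
  shows "\<bar>2 * u * (m11 * u + m12 * v) + 2 * v * (m21 * u + m22 * v)\<bar> \<le> 4 * M * (u\<^sup>2 + v\<^sup>2)"
proof -
  have b: "\<bar>m11\<bar> \<le> M" "\<bar>m12\<bar> \<le> M" "\<bar>m21\<bar> \<le> M" "\<bar>m22\<bar> \<le> M" "0 \<le> M"
    using assms by linarith+
  have "\<bar>2 * u * (m11 * u + m12 * v) + 2 * v * (m21 * u + m22 * v)\<bar>
      \<le> \<bar>2 * u * (m11 * u)\<bar> + \<bar>2 * u * (m12 * v)\<bar> + \<bar>2 * v * (m21 * u)\<bar> + \<bar>2 * v * (m22 * v)\<bar>"
    unfolding distrib_left by linarith
  also have "\<dots> = 2 * \<bar>u\<bar> * (\<bar>m11\<bar> * \<bar>u\<bar> + \<bar>m12\<bar> * \<bar>v\<bar>) + 2 * \<bar>v\<bar> * (\<bar>m21\<bar> * \<bar>u\<bar> + \<bar>m22\<bar> * \<bar>v\<bar>)"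
    by (simp add: abs_mult algebra_simps)
  also have "\<dots> \<le> 2 * \<bar>u\<bar> * (M * \<bar>u\<bar> + M * \<bar>v\<bar>) + 2 * \<bar>v\<bar> * (M * \<bar>u\<bar> + M * \<bar>v\<bar>)"
    by (intro add_mono mult_left_mono mult_right_mono b) auto
  also have "\<dots> = 2 * M * (u\<^sup>2 + v\<^sup>2) + 2 * M * (2 * \<bar>u\<bar> * \<bar>v\<bar>)"
    by (simp add: algebra_simps power2_eq_square)
  also have "\<dots> \<le> 2 * M * (u\<^sup>2 + v\<^sup>2) + 2 * M * (u\<^sup>2 + v\<^sup>2)"
    using sum_squares_bound[of "\<bar>u\<bar>" "\<bar>v\<bar>"] b(5) by (intro add_left_mono mult_left_mono) simp_all
  finally show ?thesis by simp
qed

lemma real_linear_system_vanishes: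
  fixes u v m11 m12 m21 m22 :: "real \<Rightarrow> real"
  assumes du: "\<And>x. (u has_real_derivative (m11 x * u x + m12 x * v x)) (at x)"
    and dv: "\<And>x. (v has_real_derivative (m21 x * u x + m22 x * v x)) (at x)"
    and cont: "continuous_on UNIV m11" "continuous_on UNIV m12"
      "continuous_on UNIV m21" "continuous_on UNIV m22"
    and "u x0 = 0" "v x0 = 0"
  shows "u x = 0 \<and> v x = 0"
proof -
  define E where "E t = (u t)\<^sup>2 + (v t)\<^sup>2" for t
  define E' where "E' t = 2 * u t * (m11 t * u t + m12 t * v t) + 2 * v t * (m21 t * u t + m22 t * v t)" for t
  have der: "(E has_real_derivative E' t) (at t)" for t
    unfolding E_def E'_def by (auto intro!: derivative_eq_intros du dv simp: power2_eq_square)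
  have "E x = 0"
  proof (rule vanishing_everywhere[OF der])
    show "E t \<ge> 0" for t by (simp add: E_def)
    show "E x0 = 0" using \<open>u x0 = 0\<close> \<open>v x0 = 0\<close> by (simp add: E_def)
    fix y
    have cM: "continuous_on UNIV (\<lambda>t. \<bar>m11 t\<bar> + \<bar>m12 t\<bar> + \<bar>m21 t\<bar> + \<bar>m22 t\<bar>)"
      using cont by (intro continuous_intros)
    obtain M where M: "\<And>t. \<bar>t - y\<bar> < 1 \<Longrightarrow> \<bar>\<bar>m11 t\<bar> + \<bar>m12 t\<bar> + \<bar>m21 t\<bar> + \<bar>m22 t\<bar>\<bar> \<le> M"
      using continuous_bounded_near[OF cM, of y] by blast
    have "\<bar>E' t\<bar> \<le> (4 * M) * E t" if "\<bar>t - y\<bar> < 1" for t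
      unfolding E'_def E_def using M[OF that] by (intro abs_quadratic_derivative_le) linarith
    then show "\<exists>r>0. \<exists>L. \<forall>t. \<bar>t - y\<bar> < r \<longrightarrow> \<bar>E' t\<bar> \<le> L * E t"
      by (intro exI[of _ 1] conjI exI[of _ "4 * M"]) auto
  qed
  then show ?thesis unfolding E_def by (simp add: add_nonneg_eq_0_iff)
qed

lemma linear_system_vanishes:
  fixes z1 z2 :: "real \<Rightarrow> complex" and m11 m12 m21 m22 :: "real \<Rightarrow> real"
  assumes d1: "\<And>x. (z1 has_vector_derivative (of_real (m11 x) * z1 x + of_real (m12 x) * z2 x)) (at x)"
    and d2: "\<And>x. (z2 has_vector_derivative (of_real (m21 x) * z1 x + of_real (m22 x) * z2 x)) (at x)"
    and cont: "continuous_on UNIV m11" "continuous_on UNIV m12"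
      "continuous_on UNIV m21" "continuous_on UNIV m22"
    and z: "z1 x0 = 0" "z2 x0 = 0"
  shows "z1 x = 0 \<and> z2 x = 0"
proof -
  have "Re (z1 x) = 0 \<and> Re (z2 x) = 0"
  proof (rule real_linear_system_vanishes[of "\<lambda>t. Re (z1 t)" m11 m12 "\<lambda>t. Re (z2 t)" m21 m22 x0, OF _ _ cont])
    show "((\<lambda>t. Re (z1 t)) has_real_derivative m11 y * Re (z1 y) + m12 y * Re (z2 y)) (at y)" for y
      using has_field_derivative_Re[OF d1[of y]] by simp
    show "((\<lambda>t. Re (z2 t)) has_real_derivative m21 y * Re (z1 y) + m22 y * Re (z2 y)) (at y)" for y
      using has_field_derivative_Re[OF d2[of y]] by simp
  qed (use z in simp_all)
  moreover have "Im (z1 x) = 0 \<and> Im (z2 x) = 0"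
  proof (rule real_linear_system_vanishes[of "\<lambda>t. Im (z1 t)" m11 m12 "\<lambda>t. Im (z2 t)" m21 m22 x0, OF _ _ cont])
    show "((\<lambda>t. Im (z1 t)) has_real_derivative m11 y * Im (z1 y) + m12 y * Im (z2 y)) (at y)" for y
      using has_field_derivative_Im[OF d1[of y]] by simp
    show "((\<lambda>t. Im (z2 t)) has_real_derivative m21 y * Im (z1 y) + m22 y * Im (z2 y)) (at y)" for y
      using has_field_derivative_Im[OF d2[of y]] by simp
  qed (use z in simp_all)
  ultimately show ?thesis by (simp add: complex_eq_iff)
qed

lemma abs_le_linear_near_zero:
  fixes g g' :: "real \<Rightarrow> real"
  assumes der: "\<And>s. (g has_real_derivative g' s) (at s)" and "isCont g' a" and "g a = 0"
  shows "\<exists>\<delta>>0. \<exists>K. \<forall>s. \<bar>s - a\<bar> < \<delta> \<longrightarrow> \<bar>g s\<bar> \<le> K * \<bar>s - a\<bar>"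
proof -
  obtain \<delta> where "\<delta> > 0" and \<delta>: "\<And>s. \<bar>s - a\<bar> < \<delta> \<Longrightarrow> \<bar>g' s - g' a\<bar> < 1"
    using \<open>isCont g' a\<close>[unfolded continuous_at_eps_delta, rule_format, of 1] by (auto simp: dist_real_def)
  have "\<bar>g s\<bar> \<le> (\<bar>g' a\<bar> + 1) * \<bar>s - a\<bar>" if s: "\<bar>s - a\<bar> < \<delta>" for s
  proof (cases "s = a")
    case True then show ?thesis using \<open>g a = 0\<close> by simp
  next
    case False
    have "\<exists>z. min s a < z \<and> z < max s a \<and> g (max s a) - g (min s a) = (max s a - min s a) * g' z"
      by (rule MVT2) (use False der in auto)
    then obtain z where z: "min s a < z" "z < max s a"
      and mvt: "g (max s a) - g (min s a) = (max s a - min s a) * g' z" by blast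
    have "\<bar>z - a\<bar> < \<delta>" using z s by (auto simp: min_def max_def split: if_splits)
    then have "\<bar>g' z\<bar> \<le> \<bar>g' a\<bar> + 1" using \<delta> by fastforce
    moreover have "\<bar>g s\<bar> = \<bar>s - a\<bar> * \<bar>g' z\<bar>"
    proof -
      have "\<bar>g (max s a) - g (min s a)\<bar> = \<bar>max s a - min s a\<bar> * \<bar>g' z\<bar>"
        using mvt by (simp add: abs_mult)
      moreover have "\<bar>g (max s a) - g (min s a)\<bar> = \<bar>g s\<bar>"
        using \<open>g a = 0\<close> by (cases "s \<le> a") (auto simp: min_def max_def)
      moreover have "\<bar>max s a - min s a\<bar> = \<bar>s - a\<bar>" by (auto simp: min_def max_def)
      ultimately show ?thesis by simp
    qed
    ultimately show ?thesis by (metis abs_ge_zero mult.commute mult_left_mono)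
  qed
  then show ?thesis using \<open>\<delta> > 0\<close> by blast
qed

lemma IVT_at_bot_at_top:
  fixes g :: "real \<Rightarrow> real"
  assumes "continuous_on UNIV g" "(g \<longlongrightarrow> A) at_bot" "(g \<longlongrightarrow> B) at_top" "A < y" "y < B"
  shows "\<exists>x. g x = y"
proof -
  obtain M1 where M1: "\<And>x. x \<le> M1 \<Longrightarrow> g x < y"
    using order_tendstoD(2)[OF assms(2) assms(4)] by (auto simp: eventually_at_bot_linorder)
  obtain M2 where M2: "\<And>x. x \<ge> M2 \<Longrightarrow> g x > y"
    using order_tendstoD(1)[OF assms(3) assms(5)] by (auto simp: eventually_at_top_linorder)
  have "\<exists>x. min M1 M2 \<le> x \<and> x \<le> max M1 M2 \<and> g x = y"
    by (rule IVT') (use M1 M2 continuous_on_subset[OF assms(1)] in \<open>auto intro: less_imp_le\<close>)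
  then show ?thesis by blast
qed

lemma nonvanishing_sign_constant:
  fixes h :: "real \<Rightarrow> real"
  assumes "continuous_on UNIV h" and "\<And>x. X \<le> x \<Longrightarrow> h x \<noteq> 0" and "X \<le> x"
  shows "0 < sgn (h X) * h x"
proof (rule ccontr)
  assume "\<not> 0 < sgn (h X) * h x"
  moreover have "0 < sgn (h X) * h X" using assms(2)[of X] by (simp add: sgn_real_def)
  ultimately obtain t where "X \<le> t" "t \<le> x" "sgn (h X) * h t = 0"
    using IVT2'[of "\<lambda>t. sgn (h X) * h t" x 0 X] assms(3)
      continuous_on_subset[OF continuous_on_mult_left[OF assms(1)]] by fastforce
  then show False using assms(2)[of t] assms(2)[of X] by (simp add: sgn_real_def split: if_splits)
qed

lemma bounded_not_linear_growth:
  fixes g g' :: "real \<Rightarrow> real"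
  assumes "\<And>t. (g has_real_derivative g' t) (at t)" and "\<And>t. X \<le> t \<Longrightarrow> \<delta> \<le> g' t" and "0 < \<delta>"
    and "\<And>t. \<bar>g t\<bar> \<le> B"
  shows False
proof -
  define x where "x = X + (2 * B + 1) / \<delta>"
  have "0 \<le> B" using assms(4)[of X] by linarith
  then have "X \<le> x" using \<open>0 < \<delta>\<close> by (simp add: x_def)
  have "(\<lambda>t. g t - t * \<delta>) X \<le> (\<lambda>t. g t - t * \<delta>) x"
    by (rule DERIV_nonneg_imp_nondecreasing[OF \<open>X \<le> x\<close>])
       (use assms(1,2) in \<open>force intro!: derivative_eq_intros\<close>)
  moreover have "(x - X) * \<delta> = 2 * B + 1" using \<open>0 < \<delta>\<close> by (simp add: x_def)
  ultimately show False using assms(4)[of x] assms(4)[of X] by (simp add: algebra_simps abs_le_iff)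
qed

lemma bounded_range_if_bounded_outside:
  fixes g :: "real \<Rightarrow> 'a::real_normed_vector"
  assumes "continuous_on UNIV g" "\<And>x. X \<le> \<bar>x\<bar> \<Longrightarrow> norm (g x) \<le> B"
  shows "bounded (range g)"
proof -
  have "compact (g ` {-X..X})" by (rule compact_continuous_image[OF continuous_on_subset[OF assms(1)]]) auto
  then obtain M where M: "\<And>y. y \<in> g ` {-X..X} \<Longrightarrow> norm y \<le> M"
    using compact_imp_bounded bounded_iff by metis
  have "norm (g x) \<le> max M B" for x
  proof (cases "X \<le> \<bar>x\<bar>")
    case True then show ?thesis using assms(2) by force
  next
    case False then have "x \<in> {-X..X}" by auto
    then show ?thesis using M by force
  qed
  then show ?thesis unfolding bounded_iff by blast
qed

lemma bounded_if_tendsto_at_top_at_bot: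
  fixes h :: "real \<Rightarrow> real"
  assumes "continuous_on UNIV h" "(h \<longlongrightarrow> La) at_top" "(h \<longlongrightarrow> Lb) at_bot"
  shows "\<exists>B. \<forall>x. \<bar>h x\<bar> \<le> B"
proof -
  obtain N1 where N1: "\<And>x. x \<ge> N1 \<Longrightarrow> dist (h x) La < 1"
    using tendsto_iff[THEN iffD1, OF assms(2), rule_format, of 1] by (auto simp: eventually_at_top_linorder)
  obtain N2 where N2: "\<And>x. x \<le> N2 \<Longrightarrow> dist (h x) Lb < 1"
    using tendsto_iff[THEN iffD1, OF assms(3), rule_format, of 1] by (auto simp: eventually_at_bot_linorder)
  have "norm (h x) \<le> max \<bar>La\<bar> \<bar>Lb\<bar> + 1" if "max N1 (- N2) \<le> \<bar>x\<bar>" for x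
  proof (cases "x \<ge> 0")
    case True then show ?thesis using N1[of x] that by (auto simp: dist_real_def)
  next
    case False then show ?thesis using N2[of x] that by (auto simp: dist_real_def)
  qed
  then have "bounded (range h)" by (rule bounded_range_if_bounded_outside[OF assms(1)])
  then show ?thesis by (auto simp: bounded_iff)
qed

lemma has_vector_derivative_componentwise:
  fixes y :: "real \<Rightarrow> 'a::real_normed_vector ^ 'n"
  assumes "\<And>i. ((\<lambda>t. y t $ i) has_vector_derivative D $ i) (at x)"
  shows "(y has_vector_derivative D) (at x)"
proof -
  have "((\<lambda>t. \<chi> i. (y t $ i - y x $ i - (t - x) *\<^sub>R D $ i) /\<^sub>R norm (t - x)) \<longlongrightarrow> (\<chi> i. 0)) (at x)"
    using assms by (intro tendsto_vec_lambda) (simp add: has_vector_derivative_def has_derivative_at_within)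
  moreover have "(\<lambda>t. \<chi> i. (y t $ i - y x $ i - (t - x) *\<^sub>R D $ i) /\<^sub>R norm (t - x))
      = (\<lambda>t. (y t - y x - (t - x) *\<^sub>R D) /\<^sub>R norm (t - x))"
    by (rule ext) (simp add: vec_eq_iff)
  ultimately show ?thesis
    unfolding has_vector_derivative_def has_derivative_at_within
    by (simp add: bounded_linear_scaleR_left zero_vec_def)
qed

lemma Re_cnj_mult_lower_bound:
  fixes C D e :: complex and u s :: real
  assumes "complex_of_real u * e = D - C" "norm D \<le> norm C / 2" "0 < s * u" "s * u \<le> 1" "\<bar>s\<bar> = 1"
    and "C \<noteq> 0"
  shows "(norm C)\<^sup>2 / 2 \<le> s * Re (cnj (- C) * e)"
proof -
  define R where "R = Re (cnj (- C) * e)"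
  have "u * R = Re (cnj (- C) * (D - C))"
    unfolding R_def assms(1)[symmetric] by (simp add: algebra_simps)
  also have "\<dots> = (norm C)\<^sup>2 - Re (cnj C * D)"
    using cmod_power2[of C] by (simp add: algebra_simps power2_eq_square)
  finally have uR: "u * R = (norm C)\<^sup>2 - Re (cnj C * D)" .
  have "Re (cnj C * D) \<le> norm C * norm D"
    using complex_Re_le_cmod[of "cnj C * D"] by (simp add: norm_mult)
  also have "\<dots> \<le> norm C * (norm C / 2)" using assms(2) by (intro mult_left_mono) auto
  finally have "(norm C)\<^sup>2 / 2 \<le> u * R" using uR by (simp add: power2_eq_square)
  moreover have "s * s = 1" using assms(5) abs_mult_self_eq[of s] by simp
  then have "u * R = (s * u) * (s * R)" by (metis mult.assoc mult.left_commute mult_1)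
  ultimately have prod: "(norm C)\<^sup>2 / 2 \<le> (s * u) * (s * R)" by simp
  have "0 < (norm C)\<^sup>2 / 2" using assms(6) by simp
  then have "0 < s * R"
    using prod assms(3) mult_nonneg_nonpos[of "s * u" "s * R"] by linarith
  then have "(s * u) * (s * R) \<le> 1 * (s * R)"
    using assms(4) by (intro mult_right_mono) auto
  then show ?thesis using prod by (simp add: R_def)
qed

section \<open>Second-order equations with asymptotically constant coefficients\<close>

text \<open>A solution \<open>w\<close> of \<open>w'' + q w' + p w = 0\<close> is represented by the pair \<open>(w1, w2) = (w, w')\<close>;
  \<open>p_inf\<close> and \<open>q_inf\<close> are the limits of the coefficients at \<open>+\<infinity>\<close>.\<close>

lemma two_abs_mult_le:
  fixes a b s :: real
  assumes "s > 0"
  shows "2 * \<bar>a * b\<bar> \<le> s * a\<^sup>2 + b\<^sup>2 / s"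
proof -
  have "0 \<le> (s * \<bar>a\<bar> - \<bar>b\<bar>)\<^sup>2" by simp
  then have "(2 * \<bar>a * b\<bar>) * s \<le> (s * a\<^sup>2 + b\<^sup>2 / s) * s"
    using assms by (simp add: abs_mult power2_eq_square algebra_simps)
  then show ?thesis using assms by (simp add: mult_le_cancel_right)
qed

lemma perturbation_sq_le:
  fixes a b u v \<epsilon> :: real
  assumes "\<bar>a\<bar> \<le> \<epsilon>" "\<bar>b\<bar> \<le> \<epsilon>" "\<epsilon> \<le> 1"
  shows "(a * u + b * v)\<^sup>2 \<le> 2 * \<epsilon> * (u\<^sup>2 + v\<^sup>2)"
proof -
  have "(a * u + b * v)\<^sup>2 \<le> 2 * (a\<^sup>2 * u\<^sup>2 + b\<^sup>2 * v\<^sup>2)"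
    using sum_squares_bound[of "a * u" "b * v"] by (simp add: power2_sum power_mult_distrib)
  also have "\<dots> \<le> 2 * (\<epsilon> * u\<^sup>2 + \<epsilon> * v\<^sup>2)"
  proof -
    have "0 \<le> \<epsilon>" using assms(1) by linarith
    then have "\<epsilon>\<^sup>2 \<le> \<epsilon>" using assms(3) by (simp add: power2_eq_square mult_left_le)
    moreover have "a\<^sup>2 \<le> \<epsilon>\<^sup>2" "b\<^sup>2 \<le> \<epsilon>\<^sup>2"
      using assms(1,2) \<open>0 \<le> \<epsilon>\<close> by (simp_all add: power2_le_iff_abs_le)
    ultimately have "a\<^sup>2 \<le> \<epsilon>" "b\<^sup>2 \<le> \<epsilon>" by linarith+
    then show ?thesis by (intro mult_left_mono add_mono mult_right_mono) auto
  qed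
  finally show ?thesis by (simp add: algebra_simps)
qed

lemma sq_norm_eigencoordinates_le:
  fixes a b l1 l2 :: real
  shows "(a + b)\<^sup>2 + (l1 * a + l2 * b)\<^sup>2 \<le> (2 + 2 * (l1\<^sup>2 + l2\<^sup>2)) * (a\<^sup>2 + b\<^sup>2)"
proof -
  have "(2 + 2 * (l1\<^sup>2 + l2\<^sup>2)) * (a\<^sup>2 + b\<^sup>2) - ((a + b)\<^sup>2 + (l1 * a + l2 * b)\<^sup>2)
      = (a - b)\<^sup>2 + (l1 * a - l2 * b)\<^sup>2 + 2 * (l2 * a)\<^sup>2 + 2 * (l1 * b)\<^sup>2"
    by (simp add: power2_eq_square algebra_simps)
  moreover have "0 \<le> (a - b)\<^sup>2 + (l1 * a - l2 * b)\<^sup>2 + 2 * (l2 * a)\<^sup>2 + 2 * (l1 * b)\<^sup>2"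
    by simp
  ultimately show ?thesis by linarith
qed

lemma perturbation_eigencoordinates_sq_le:
  fixes a b u v l1 l2 \<epsilon> \<theta> D :: real
  assumes "\<bar>a\<bar> \<le> \<epsilon>" "\<bar>b\<bar> \<le> \<epsilon>" "\<epsilon> \<le> 1" "4 * (1 + (l1\<^sup>2 + l2\<^sup>2)) * \<epsilon> \<le> \<theta> * D\<^sup>2" "D \<noteq> 0"
  shows "((a * (u + v) + b * (l1 * u + l2 * v)) / D)\<^sup>2 \<le> \<theta> * (u\<^sup>2 + v\<^sup>2)"
proof -
  have "0 \<le> \<epsilon>" using assms(1) by linarith
  have "(a * (u + v) + b * (l1 * u + l2 * v))\<^sup>2 \<le> 2 * \<epsilon> * ((u + v)\<^sup>2 + (l1 * u + l2 * v)\<^sup>2)"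
    using assms(1-3) by (rule perturbation_sq_le)
  also have "\<dots> \<le> 2 * \<epsilon> * ((2 + 2 * (l1\<^sup>2 + l2\<^sup>2)) * (u\<^sup>2 + v\<^sup>2))"
    using sq_norm_eigencoordinates_le \<open>0 \<le> \<epsilon>\<close> by (intro mult_left_mono) auto
  also have "\<dots> = (4 * (1 + (l1\<^sup>2 + l2\<^sup>2)) * \<epsilon>) * (u\<^sup>2 + v\<^sup>2)" by (simp add: algebra_simps)
  also have "\<dots> \<le> (\<theta> * D\<^sup>2) * (u\<^sup>2 + v\<^sup>2)" using assms(4) by (intro mult_right_mono) auto
  finally show ?thesis using assms(5) by (simp add: power_divide divide_le_eq mult_ac)
qed

lemma saddle_roots:
  fixes p q :: real
  assumes "p < 0"
  obtains l1 l2 where "l1 + l2 = - q" "l1 * l2 = p" "l1 < 0" "0 < l2"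
proof -
  define s where "s = sqrt (q\<^sup>2 - 4 * p)"
  have "0 \<le> q\<^sup>2 - 4 * p" using assms zero_le_power2[of q] by linarith
  then have s2: "s\<^sup>2 = q\<^sup>2 - 4 * p" by (simp add: s_def)
  have "sqrt (q\<^sup>2) < s" unfolding s_def using assms by (intro real_sqrt_less_mono) simp
  then have "\<bar>q\<bar> < s" by simp
  show ?thesis
  proof (rule that[of "(- q - s) / 2" "(- q + s) / 2"])
    have "(- q - s) / 2 * ((- q + s) / 2) = (q\<^sup>2 - s\<^sup>2) / 4"
      by (simp add: power2_eq_square algebra_simps)
    then show "(- q - s) / 2 * ((- q + s) / 2) = p" using s2 by simp
  qed (use \<open>\<bar>q\<bar> < s\<close> in \<open>auto simp: field_simps\<close>)
qed

text \<open>Eigen-coordinates of the limiting system: \<open>\<alpha>\<close> along the stable root \<open>l1\<close>, \<open>\<beta>\<close> along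
  the unstable root \<open>l2\<close>; \<open>r\<close> collects the deviation of the coefficients from their limits.\<close>

lemma saddle_coordinates:
  fixes w1 w2 p q :: "real \<Rightarrow> real"
  assumes d1: "(w1 has_real_derivative w2 x) (at x)"
    and d2: "(w2 has_real_derivative - (p x * w1 x) - q x * w2 x) (at x)"
    and sum: "l1 + l2 = - q_inf" and prod: "l1 * l2 = p_inf" and "l1 \<noteq> l2"
  defines "r \<equiv> \<lambda>x. ((p x - p_inf) * w1 x + (q x - q_inf) * w2 x) / (l2 - l1)"
  shows "((\<lambda>x. (l2 * w1 x - w2 x) / (l2 - l1)) has_real_derivative
            l1 * ((l2 * w1 x - w2 x) / (l2 - l1)) + r x) (at x)"
    and "((\<lambda>x. (w2 x - l1 * w1 x) / (l2 - l1)) has_real_derivative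
            l2 * ((w2 x - l1 * w1 x) / (l2 - l1)) - r x) (at x)"
proof -
  have D: "l2 - l1 \<noteq> 0" using \<open>l1 \<noteq> l2\<close> by simp
  have q: "q_inf = - (l1 + l2)" using sum by simp
  have "((\<lambda>x. (l2 * w1 x - w2 x) / (l2 - l1)) has_real_derivative
      (l2 * w2 x - (- (p x * w1 x) - q x * w2 x)) / (l2 - l1)) (at x)"
    using D by (auto intro!: derivative_eq_intros d1 d2)
  moreover have "l2 * w2 x - (- (p x * w1 x) - q x * w2 x)
      = l1 * (l2 * w1 x - w2 x) + ((p x - p_inf) * w1 x + (q x - q_inf) * w2 x)"
    unfolding q prod[symmetric] by (simp add: algebra_simps)
  ultimately show "((\<lambda>x. (l2 * w1 x - w2 x) / (l2 - l1)) has_real_derivative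
      l1 * ((l2 * w1 x - w2 x) / (l2 - l1)) + r x) (at x)"
    by (simp add: r_def add_divide_distrib)
  have "((\<lambda>x. (w2 x - l1 * w1 x) / (l2 - l1)) has_real_derivative
      ((- (p x * w1 x) - q x * w2 x) - l1 * w2 x) / (l2 - l1)) (at x)"
    using D by (auto intro!: derivative_eq_intros d1 d2)
  moreover have "(- (p x * w1 x) - q x * w2 x) - l1 * w2 x
      = l2 * (w2 x - l1 * w1 x) - ((p x - p_inf) * w1 x + (q x - q_inf) * w2 x)"
    unfolding q prod[symmetric] by (simp add: algebra_simps)
  ultimately show "((\<lambda>x. (w2 x - l1 * w1 x) / (l2 - l1)) has_real_derivative
      l2 * ((w2 x - l1 * w1 x) / (l2 - l1)) - r x) (at x)"
    by (simp add: r_def diff_divide_distrib right_diff_distrib)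
qed

text \<open>A solution tending to the saddle stays in the cone around the stable direction: otherwise
  \<open>\<beta>\<^sup>2 - \<alpha>\<^sup>2\<close> would grow exponentially.\<close>

lemma saddle_stable_cone:
  fixes \<alpha> \<beta> r :: "real \<Rightarrow> real"
  assumes "l1 < 0" "0 < l2"
    and d\<alpha>: "\<And>x. X \<le> x \<Longrightarrow> (\<alpha> has_real_derivative l1 * \<alpha> x + r x) (at x)"
    and d\<beta>: "\<And>x. X \<le> x \<Longrightarrow> (\<beta> has_real_derivative l2 * \<beta> x - r x) (at x)"
    and small: "\<And>x. X \<le> x \<Longrightarrow> (r x)\<^sup>2 \<le> (min l2 (- l1))\<^sup>2 / 4 * ((\<alpha> x)\<^sup>2 + (\<beta> x)\<^sup>2)"
    and "(\<alpha> \<longlongrightarrow> 0) at_top" "(\<beta> \<longlongrightarrow> 0) at_top" and "X \<le> x"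
  shows "(\<beta> x)\<^sup>2 \<le> (\<alpha> x)\<^sup>2"
proof -
  define m where "m = min l2 (- l1)"
  have "m > 0" using assms(1,2) by (simp add: m_def)
  define F where "F x = (\<beta> x)\<^sup>2 - (\<alpha> x)\<^sup>2" for x
  define F' where "F' x = 2 * \<beta> x * (l2 * \<beta> x - r x) - 2 * \<alpha> x * (l1 * \<alpha> x + r x)" for x
  have "F x \<le> 0"
  proof (rule nonpos_if_growing_and_tendsto_zero[of X F F' "m / 2"])
    show "(F has_real_derivative F' y) (at y)" if "X \<le> y" for y
      unfolding F_def F'_def by (auto intro!: derivative_eq_intros d\<alpha> d\<beta> that simp: power2_eq_square)
    show "m / 2 * F y \<le> F' y" if y: "X \<le> y" for y
    proof -
      let ?S = "(\<alpha> y)\<^sup>2 + (\<beta> y)\<^sup>2"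
      have "2 * \<bar>(\<alpha> y + \<beta> y) * r y\<bar> \<le> (m / 2) * (\<alpha> y + \<beta> y)\<^sup>2 + (r y)\<^sup>2 / (m / 2)"
        using two_abs_mult_le[of "m / 2"] \<open>m > 0\<close> by simp
      also have "\<dots> \<le> (m / 2) * (2 * ?S) + (m / 2) * ?S"
      proof (rule add_mono)
        show "m / 2 * (\<alpha> y + \<beta> y)\<^sup>2 \<le> m / 2 * (2 * ?S)"
          using \<open>m > 0\<close> sum_squares_bound[of "\<alpha> y" "\<beta> y"] by (simp add: power2_sum)
        show "(r y)\<^sup>2 / (m / 2) \<le> m / 2 * ?S"
          using small[OF y] \<open>m > 0\<close> by (simp add: m_def divide_le_eq power2_eq_square mult_ac)
      qed
      also have "\<dots> = 3 * m / 2 * ?S" by (simp add: algebra_simps)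
      finally have cross: "2 * \<bar>(\<alpha> y + \<beta> y) * r y\<bar> \<le> 3 * m / 2 * ?S" .
      have "m * (\<beta> y)\<^sup>2 \<le> l2 * (\<beta> y)\<^sup>2" "m * (\<alpha> y)\<^sup>2 \<le> - l1 * (\<alpha> y)\<^sup>2"
        by (intro mult_right_mono; simp add: m_def)+
      moreover have "F' y = 2 * l2 * (\<beta> y)\<^sup>2 - 2 * l1 * (\<alpha> y)\<^sup>2 - 2 * ((\<alpha> y + \<beta> y) * r y)"
        by (simp add: F'_def algebra_simps power2_eq_square)
      moreover have "m / 2 * F y \<le> m / 2 * ?S" using \<open>m > 0\<close> by (simp add: F_def)
      moreover have "3 * m / 2 * ?S = 3 / 2 * (m * (\<alpha> y)\<^sup>2) + 3 / 2 * (m * (\<beta> y)\<^sup>2)"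
        "m / 2 * ?S = 1 / 2 * (m * (\<alpha> y)\<^sup>2) + 1 / 2 * (m * (\<beta> y)\<^sup>2)"
        by (simp_all add: algebra_simps)
      moreover have "(\<alpha> y + \<beta> y) * r y \<le> \<bar>(\<alpha> y + \<beta> y) * r y\<bar>" by simp
      ultimately show ?thesis using cross by linarith
    qed
    show "((\<lambda>x. F x) \<longlongrightarrow> 0) at_top"
      unfolding F_def using assms(6,7) by (auto intro!: tendsto_eq_intros)
  qed (use \<open>m > 0\<close> \<open>X \<le> x\<close> in auto)
  then show ?thesis by (simp add: F_def)
qed

lemma saddle_stable_decay:
  fixes \<alpha> \<beta> r :: "real \<Rightarrow> real"
  assumes "l1 < 0" "0 < l2"
    and d\<alpha>: "\<And>x. X \<le> x \<Longrightarrow> (\<alpha> has_real_derivative l1 * \<alpha> x + r x) (at x)"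
    and d\<beta>: "\<And>x. X \<le> x \<Longrightarrow> (\<beta> has_real_derivative l2 * \<beta> x - r x) (at x)"
    and small: "\<And>x. X \<le> x \<Longrightarrow> (r x)\<^sup>2 \<le> \<theta> * ((\<alpha> x)\<^sup>2 + (\<beta> x)\<^sup>2)"
    and "0 \<le> \<theta>" "\<theta> \<le> (min l2 (- l1))\<^sup>2 / 4" "\<theta> \<le> \<eta>\<^sup>2 / 8" "\<eta> > 0"
    and "(\<alpha> \<longlongrightarrow> 0) at_top" "(\<beta> \<longlongrightarrow> 0) at_top" and "X \<le> x"
  shows "(\<alpha> x)\<^sup>2 + (\<beta> x)\<^sup>2 \<le> 2 * (\<alpha> X)\<^sup>2 * exp ((2 * l1 + \<eta>) * (x - X))"
proof -
  have cone: "(\<beta> y)\<^sup>2 \<le> (\<alpha> y)\<^sup>2" if "X \<le> y" for y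
  proof (rule saddle_stable_cone[OF assms(1,2) d\<alpha> d\<beta> _ assms(10,11) that])
    fix z assume "X \<le> z"
    have "\<theta> * ((\<alpha> z)\<^sup>2 + (\<beta> z)\<^sup>2) \<le> (min l2 (- l1))\<^sup>2 / 4 * ((\<alpha> z)\<^sup>2 + (\<beta> z)\<^sup>2)"
      using assms(7) by (intro mult_right_mono) auto
    with small[OF \<open>X \<le> z\<close>] show "(r z)\<^sup>2 \<le> (min l2 (- l1))\<^sup>2 / 4 * ((\<alpha> z)\<^sup>2 + (\<beta> z)\<^sup>2)"
      by linarith
  qed
  have "(\<alpha> x)\<^sup>2 \<le> (\<alpha> X)\<^sup>2 * exp ((2 * l1 + \<eta>) * (x - X))"
  proof (rule growth_le_exp[OF \<open>X \<le> x\<close>, of "\<lambda>t. (\<alpha> t)\<^sup>2" "\<lambda>t. 2 * \<alpha> t * (l1 * \<alpha> t + r t)"])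
    fix t assume t: "X \<le> t" "t \<le> x"
    show "((\<lambda>t. (\<alpha> t)\<^sup>2) has_real_derivative 2 * \<alpha> t * (l1 * \<alpha> t + r t)) (at t)"
      using t by (auto intro!: derivative_eq_intros d\<alpha> simp: power2_eq_square)
    have "\<theta> * ((\<alpha> t)\<^sup>2 + (\<beta> t)\<^sup>2) \<le> \<theta> * (2 * (\<alpha> t)\<^sup>2)"
      using cone[OF t(1)] \<open>0 \<le> \<theta>\<close> by (intro mult_left_mono) auto
    with small[OF t(1)] have "(r t)\<^sup>2 \<le> (2 * \<theta>) * (\<alpha> t)\<^sup>2" by simp
    also have "\<dots> \<le> \<eta>\<^sup>2 / 4 * (\<alpha> t)\<^sup>2"
      using \<open>\<theta> \<le> \<eta>\<^sup>2 / 8\<close> by (intro mult_right_mono) auto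
    finally have "(r t)\<^sup>2 / (\<eta> / 2) \<le> \<eta> / 2 * (\<alpha> t)\<^sup>2"
      using \<open>\<eta> > 0\<close> by (simp add: divide_le_eq power2_eq_square mult_ac)
    then have "2 * \<bar>\<alpha> t * r t\<bar> \<le> \<eta> * (\<alpha> t)\<^sup>2"
      using two_abs_mult_le[of "\<eta> / 2" "\<alpha> t" "r t"] \<open>\<eta> > 0\<close> by simp
    moreover have "2 * \<alpha> t * (l1 * \<alpha> t + r t) = 2 * l1 * (\<alpha> t)\<^sup>2 + 2 * (\<alpha> t * r t)"
      "(2 * l1 + \<eta>) * (\<alpha> t)\<^sup>2 = 2 * l1 * (\<alpha> t)\<^sup>2 + \<eta> * (\<alpha> t)\<^sup>2"
      by (simp_all add: algebra_simps power2_eq_square)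
    moreover have "\<alpha> t * r t \<le> \<bar>\<alpha> t * r t\<bar>" by simp
    ultimately show "2 * \<alpha> t * (l1 * \<alpha> t + r t) \<le> (2 * l1 + \<eta>) * (\<alpha> t)\<^sup>2"
      by linarith
  qed
  then show ?thesis using cone[OF \<open>X \<le> x\<close>] by simp
qed

lemma companion_decay:
  fixes w1 w2 p q :: "real \<Rightarrow> real"
  assumes d1: "\<And>x. X0 \<le> x \<Longrightarrow> (w1 has_real_derivative w2 x) (at x)"
    and d2: "\<And>x. X0 \<le> x \<Longrightarrow> (w2 has_real_derivative - (p x * w1 x) - q x * w2 x) (at x)"
    and lim_p: "(p \<longlongrightarrow> p_inf) at_top" and lim_q: "(q \<longlongrightarrow> q_inf) at_top"
    and roots: "l1 + l2 = - q_inf" "l1 * l2 = p_inf" "l1 < 0" "0 < l2"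
    and lim_w1: "(w1 \<longlongrightarrow> 0) at_top" and lim_w2: "(w2 \<longlongrightarrow> 0) at_top" and "\<eta> > 0"
  shows "\<exists>K X. \<forall>x\<ge>X. (w1 x)\<^sup>2 + (w2 x)\<^sup>2 \<le> K * exp ((2 * l1 + \<eta>) * x)"
proof -
  have "l2 - l1 \<noteq> 0" "l1 \<noteq> l2" using roots(3,4) by simp_all
  define \<alpha> where "\<alpha> = (\<lambda>x. (l2 * w1 x - w2 x) / (l2 - l1))"
  define \<beta> where "\<beta> = (\<lambda>x. (w2 x - l1 * w1 x) / (l2 - l1))"
  define r where "r = (\<lambda>x. ((p x - p_inf) * w1 x + (q x - q_inf) * w2 x) / (l2 - l1))"
  have d\<alpha>: "(\<alpha> has_real_derivative l1 * \<alpha> x + r x) (at x)"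
    and d\<beta>: "(\<beta> has_real_derivative l2 * \<beta> x - r x) (at x)" if "X0 \<le> x" for x
    using saddle_coordinates[of w1 w2 x p q, OF d1[OF that] d2[OF that] roots(1,2) \<open>l1 \<noteq> l2\<close>]
    by (simp_all add: \<alpha>_def \<beta>_def r_def)
  have w: "w1 x = \<alpha> x + \<beta> x" "w2 x = l1 * \<alpha> x + l2 * \<beta> x" for x
  proof -
    have "\<alpha> x + \<beta> x = ((l2 - l1) * w1 x) / (l2 - l1)"
      "l1 * \<alpha> x + l2 * \<beta> x = ((l2 - l1) * w2 x) / (l2 - l1)"
      by (simp_all add: \<alpha>_def \<beta>_def times_divide_eq_right add_divide_distrib[symmetric] algebra_simps)
    then show "w1 x = \<alpha> x + \<beta> x" "w2 x = l1 * \<alpha> x + l2 * \<beta> x"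
      using \<open>l2 - l1 \<noteq> 0\<close> by simp_all
  qed
  define \<Lambda> where "\<Lambda> = l1\<^sup>2 + l2\<^sup>2"
  define \<theta> where "\<theta> = min ((min l2 (- l1))\<^sup>2 / 4) (\<eta>\<^sup>2 / 8)"
  have "\<theta> > 0" using roots(3,4) \<open>\<eta> > 0\<close> by (simp add: \<theta>_def)
  define \<epsilon> where "\<epsilon> = min 1 (\<theta> * (l2 - l1)\<^sup>2 / (4 * (1 + \<Lambda>)))"
  have "\<Lambda> \<ge> 0" by (simp add: \<Lambda>_def)
  then have "\<epsilon> > 0" using \<open>\<theta> > 0\<close> \<open>l2 - l1 \<noteq> 0\<close> by (simp add: \<epsilon>_def)
  have "\<epsilon> \<le> \<theta> * (l2 - l1)\<^sup>2 / (4 * (1 + \<Lambda>))" by (simp add: \<epsilon>_def)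
  then have \<epsilon>: "4 * (1 + \<Lambda>) * \<epsilon> \<le> \<theta> * (l2 - l1)\<^sup>2"
    using \<open>\<Lambda> \<ge> 0\<close> by (simp add: le_divide_eq mult.commute)
  have "\<forall>\<^sub>F x in at_top. X0 \<le> x \<and> dist (p x) p_inf < \<epsilon> \<and> dist (q x) q_inf < \<epsilon>"
    using lim_p lim_q \<open>\<epsilon> > 0\<close> by (auto simp: tendsto_iff intro!: eventually_conj eventually_ge_at_top)
  then obtain X1 where X1: "\<And>x. X1 \<le> x \<Longrightarrow> X0 \<le> x \<and> \<bar>p x - p_inf\<bar> \<le> \<epsilon> \<and> \<bar>q x - q_inf\<bar> \<le> \<epsilon>"
    by (force simp: eventually_at_top_linorder dist_real_def)
  have "(w1 x)\<^sup>2 + (w2 x)\<^sup>2 \<le> ((4 + 4 * \<Lambda>) * (\<alpha> X1)\<^sup>2 * exp (- (2 * l1 + \<eta>) * X1)) * exp ((2 * l1 + \<eta>) * x)"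
    if "X1 \<le> x" for x
  proof -
    have "(\<alpha> x)\<^sup>2 + (\<beta> x)\<^sup>2 \<le> 2 * (\<alpha> X1)\<^sup>2 * exp ((2 * l1 + \<eta>) * (x - X1))"
    proof (rule saddle_stable_decay[OF roots(3,4) _ _ _ _ _ _ \<open>\<eta> > 0\<close> _ _ that])
      show "(r y)\<^sup>2 \<le> \<theta> * ((\<alpha> y)\<^sup>2 + (\<beta> y)\<^sup>2)" if "X1 \<le> y" for y
        unfolding r_def w using X1[OF that] \<epsilon> \<open>l2 - l1 \<noteq> 0\<close>
        by (intro perturbation_eigencoordinates_sq_le) (auto simp: \<epsilon>_def \<Lambda>_def)
      show "(\<alpha> \<longlongrightarrow> 0) at_top" "(\<beta> \<longlongrightarrow> 0) at_top"
        unfolding \<alpha>_def \<beta>_def using \<open>l2 - l1 \<noteq> 0\<close> by (auto intro!: tendsto_eq_intros lim_w1 lim_w2)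
    qed (use d\<alpha> d\<beta> X1 \<open>\<theta> > 0\<close> in \<open>auto simp: \<theta>_def\<close>)
    then have "(2 + 2 * \<Lambda>) * ((\<alpha> x)\<^sup>2 + (\<beta> x)\<^sup>2)
        \<le> (2 + 2 * \<Lambda>) * (2 * (\<alpha> X1)\<^sup>2 * exp ((2 * l1 + \<eta>) * (x - X1)))"
      using \<open>\<Lambda> \<ge> 0\<close> by (intro mult_left_mono) auto
    moreover have "(w1 x)\<^sup>2 + (w2 x)\<^sup>2 \<le> (2 + 2 * \<Lambda>) * ((\<alpha> x)\<^sup>2 + (\<beta> x)\<^sup>2)"
      unfolding w \<Lambda>_def by (rule sq_norm_eigencoordinates_le)
    ultimately have "(w1 x)\<^sup>2 + (w2 x)\<^sup>2 \<le> (2 + 2 * \<Lambda>) * (2 * (\<alpha> X1)\<^sup>2 * exp ((2 * l1 + \<eta>) * (x - X1)))"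
      by linarith
    also have "exp ((2 * l1 + \<eta>) * (x - X1)) = exp (- (2 * l1 + \<eta>) * X1) * exp ((2 * l1 + \<eta>) * x)"
      by (simp add: algebra_simps flip: exp_add)
    finally show ?thesis by (simp add: algebra_simps)
  qed
  then show ?thesis by blast
qed

lemma companion_decay_weighted:
  fixes w1 w2 p q E :: "real \<Rightarrow> real"
  assumes d1: "\<And>x. X0 \<le> x \<Longrightarrow> (w1 has_real_derivative w2 x) (at x)"
    and d2: "\<And>x. X0 \<le> x \<Longrightarrow> (w2 has_real_derivative - (p x * w1 x) - q x * w2 x) (at x)"
    and dE: "\<And>x. X0 \<le> x \<Longrightarrow> (E has_real_derivative q x * E x) (at x)" and E_pos: "\<And>x. 0 < E x"
    and lim_p: "(p \<longlongrightarrow> p_inf) at_top" and lim_q: "(q \<longlongrightarrow> q_inf) at_top" and "p_inf < 0"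
    and lim_w1: "(w1 \<longlongrightarrow> 0) at_top" and lim_w2: "(w2 \<longlongrightarrow> 0) at_top"
  shows "\<exists>K \<kappa> X. 0 < \<kappa> \<and> (\<forall>x\<ge>X. (E x * w1 x)\<^sup>2 + (E x * w2 x)\<^sup>2 \<le> K * exp (- \<kappa> * x))"
proof -
  obtain l1 l2 where roots: "l1 + l2 = - q_inf" "l1 * l2 = p_inf" "l1 < 0" "0 < l2"
    using saddle_roots[OF \<open>p_inf < 0\<close>] by blast
  obtain K X1 where decay: "\<And>x. X1 \<le> x \<Longrightarrow> (w1 x)\<^sup>2 + (w2 x)\<^sup>2 \<le> K * exp ((2 * l1 + l2 / 3) * x)"
    using companion_decay[of X0 w1 w2 p q p_inf q_inf l1 l2 "l2 / 3", OF d1 d2 lim_p lim_q roots lim_w1 lim_w2]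
      roots(4) by auto
  obtain X2 where X2: "\<And>x. X2 \<le> x \<Longrightarrow> q x \<le> q_inf + l2 / 3"
    using order_tendstoD(2)[OF lim_q, of "q_inf + l2 / 3"] roots(4)
    by (force simp: eventually_at_top_linorder)
  define X where "X = max X0 (max X1 X2)"
  have E_bound: "E x \<le> E X * exp ((q_inf + l2 / 3) * (x - X))" if "X \<le> x" for x
  proof (rule growth_le_exp[OF that, of E "\<lambda>t. q t * E t"])
    fix t assume t: "X \<le> t" "t \<le> x"
    show "(E has_real_derivative q t * E t) (at t)" using dE t by (simp add: X_def)
    show "q t * E t \<le> (q_inf + l2 / 3) * E t"
      using X2[of t] t E_pos[of t] by (intro mult_right_mono) (auto simp: X_def)
  qed
  have exp_eq: "(exp ((q_inf + l2 / 3) * (x - X)))\<^sup>2 * exp ((2 * l1 + l2 / 3) * x)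
      = exp (- 2 * (q_inf + l2 / 3) * X) * exp (- l2 * x)" for x
  proof -
    have q_inf: "q_inf = - (l1 + l2)" using roots(1) by simp
    have "2 * ((q_inf + l2 / 3) * (x - X)) + (2 * l1 + l2 / 3) * x = - 2 * (q_inf + l2 / 3) * X + - l2 * x"
      unfolding q_inf by (simp add: field_simps)
    then show ?thesis by (simp add: power2_eq_square mult.commute flip: exp_add)
  qed
  have "(E x * w1 x)\<^sup>2 + (E x * w2 x)\<^sup>2 \<le> (K * (E X)\<^sup>2 * exp (- 2 * (q_inf + l2 / 3) * X)) * exp (- l2 * x)"
    if "X \<le> x" for x
  proof -
    have "(E x * w1 x)\<^sup>2 + (E x * w2 x)\<^sup>2 = (E x)\<^sup>2 * ((w1 x)\<^sup>2 + (w2 x)\<^sup>2)"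
      by (simp add: power_mult_distrib algebra_simps)
    also have "\<dots> \<le> (E X * exp ((q_inf + l2 / 3) * (x - X)))\<^sup>2 * (K * exp ((2 * l1 + l2 / 3) * x))"
      using E_bound[OF that] decay[of x] E_pos[of x] that
      by (intro mult_mono power_mono) (auto simp: X_def)
    also have "\<dots> = (K * (E X)\<^sup>2 * exp (- 2 * (q_inf + l2 / 3) * X)) * exp (- l2 * x)"
      using exp_eq[of x] by (simp add: power_mult_distrib mult_ac)
    finally show ?thesis .
  qed
  then show ?thesis using roots(4) by blast
qed

lemma lyapunov_parameter:
  fixes P Q :: real
  assumes "P > 0" "Q > 0"
  defines "s \<equiv> Q * P / (P + Q\<^sup>2)"
  shows "0 < s" and "s\<^sup>2 \<le> P" and "s + s * Q\<^sup>2 / (2 * P) \<le> Q"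
proof -
  have PQ: "P + Q\<^sup>2 > 0" using assms(1) by (simp add: add_pos_nonneg)
  show "0 < s" using assms PQ by (simp add: s_def)
  have "(Q * P)\<^sup>2 \<le> P * (P + Q\<^sup>2)\<^sup>2"
  proof -
    have "P * (P + Q\<^sup>2)\<^sup>2 - (Q * P)\<^sup>2 = P * (P\<^sup>2 + P * Q\<^sup>2 + Q\<^sup>2 * Q\<^sup>2)"
      by (simp add: power2_eq_square algebra_simps)
    also have "\<dots> \<ge> 0" using assms(1) by simp
    finally show ?thesis by simp
  qed
  then show "s\<^sup>2 \<le> P" using PQ by (simp add: s_def power_divide divide_le_eq)
  have "s * (2 * P + Q\<^sup>2) \<le> 2 * P * Q"
  proof -
    have "Q * P * (2 * P + Q\<^sup>2) \<le> (2 * P * Q) * (P + Q\<^sup>2)"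
      using assms by (simp add: algebra_simps power2_eq_square)
    then show ?thesis using PQ by (simp add: s_def pos_divide_le_eq)
  qed
  moreover have "s + s * Q\<^sup>2 / (2 * P) = s * (2 * P + Q\<^sup>2) / (2 * P)"
    using assms(1) by (simp add: field_simps)
  ultimately show "s + s * Q\<^sup>2 / (2 * P) \<le> Q"
    using assms(1) by (simp add: divide_le_eq mult.commute)
qed

lemma lyapunov_form_bounds:
  fixes P s u v :: real
  assumes "P > 0" "s > 0" "s\<^sup>2 \<le> P"
  shows "P / 2 * u\<^sup>2 + v\<^sup>2 / 2 \<le> P * u\<^sup>2 + v\<^sup>2 - s * (u * v)"
    and "P * u\<^sup>2 + v\<^sup>2 - s * (u * v) \<le> (P + 1 + s) * (u\<^sup>2 + v\<^sup>2)"
proof -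
  have "2 * \<bar>u * v\<bar> \<le> (P / s) * u\<^sup>2 + v\<^sup>2 / (P / s)"
    using two_abs_mult_le[of "P / s" u v] assms by simp
  then have "s * (2 * \<bar>u * v\<bar>) \<le> P * u\<^sup>2 + (s\<^sup>2 / P) * v\<^sup>2"
    using assms by (simp add: field_simps power2_eq_square)
  also have "\<dots> \<le> P * u\<^sup>2 + 1 * v\<^sup>2"
    using assms by (intro add_left_mono mult_right_mono) (auto simp: divide_le_eq)
  finally have "s * \<bar>u * v\<bar> \<le> P / 2 * u\<^sup>2 + v\<^sup>2 / 2" by simp
  moreover have "s * (u * v) \<le> s * \<bar>u * v\<bar>" using assms(2) by (simp add: mult_left_mono)
  ultimately show "P / 2 * u\<^sup>2 + v\<^sup>2 / 2 \<le> P * u\<^sup>2 + v\<^sup>2 - s * (u * v)" by linarith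
  have "2 * (- u) * v \<le> (- u)\<^sup>2 + v\<^sup>2" by (rule sum_squares_bound)
  then have "- (u * v) \<le> u\<^sup>2 + v\<^sup>2"
    using zero_le_power2[of u] zero_le_power2[of v]
    by (simp only: power2_minus mult_minus_right mult_minus_left mult.assoc)
  then have "s * (- (u * v)) \<le> s * (u\<^sup>2 + v\<^sup>2)" using assms(2) by (intro mult_left_mono) auto
  then have "- (s * (u * v)) \<le> s * u\<^sup>2 + s * v\<^sup>2" by (simp add: algebra_simps)
  moreover have "0 \<le> P * v\<^sup>2" "0 \<le> u\<^sup>2" using assms(1) by simp_all
  moreover have "(P + 1 + s) * (u\<^sup>2 + v\<^sup>2) = P * u\<^sup>2 + v\<^sup>2 + (P * v\<^sup>2 + u\<^sup>2 + s * u\<^sup>2 + s * v\<^sup>2)"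
    by (simp add: algebra_simps)
  ultimately show "P * u\<^sup>2 + v\<^sup>2 - s * (u * v) \<le> (P + 1 + s) * (u\<^sup>2 + v\<^sup>2)"
    by linarith
qed

lemma lyapunov_form_derivative_bound:
  fixes P Q s u v :: real
  assumes "P > 0" "Q > 0" "s > 0" "s + s * Q\<^sup>2 / (2 * P) \<le> Q"
  shows "min Q (s * P / 2) * (u\<^sup>2 + v\<^sup>2) \<le> s * P * u\<^sup>2 + (2 * Q - s) * v\<^sup>2 - s * Q * (u * v)"
proof -
  define \<kappa> where "\<kappa> = min Q (s * P / 2)"
  have "2 * \<bar>u * v\<bar> \<le> (P / Q) * u\<^sup>2 + v\<^sup>2 / (P / Q)"
    using two_abs_mult_le[of "P / Q" u v] assms by simp
  then have "(s * Q / 2) * (2 * \<bar>u * v\<bar>) \<le> (s * Q / 2) * ((P / Q) * u\<^sup>2 + v\<^sup>2 / (P / Q))"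
    using assms by (intro mult_left_mono) auto
  also have "\<dots> = s * P / 2 * u\<^sup>2 + s * Q\<^sup>2 / (2 * P) * v\<^sup>2"
    using assms by (simp add: field_simps power2_eq_square)
  finally have "s * Q * \<bar>u * v\<bar> \<le> s * P / 2 * u\<^sup>2 + s * Q\<^sup>2 / (2 * P) * v\<^sup>2"
    by simp
  moreover have "s * Q * (u * v) \<le> s * Q * \<bar>u * v\<bar>"
    using assms by (intro mult_left_mono) auto
  ultimately have cross: "s * Q * (u * v) \<le> s * P / 2 * u\<^sup>2 + s * Q\<^sup>2 / (2 * P) * v\<^sup>2"
    by linarith
  have "Q * v\<^sup>2 \<le> (2 * Q - s - s * Q\<^sup>2 / (2 * P)) * v\<^sup>2"
    using assms(4) by (intro mult_right_mono) auto
  moreover have "\<kappa> * u\<^sup>2 \<le> s * P / 2 * u\<^sup>2" "\<kappa> * v\<^sup>2 \<le> Q * v\<^sup>2"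
    by (intro mult_right_mono; simp add: \<kappa>_def)+
  moreover have "(2 * Q - s - s * Q\<^sup>2 / (2 * P)) * v\<^sup>2 = 2 * Q * v\<^sup>2 - s * v\<^sup>2 - s * Q\<^sup>2 / (2 * P) * v\<^sup>2"
    "(2 * Q - s) * v\<^sup>2 = 2 * Q * v\<^sup>2 - s * v\<^sup>2" "\<kappa> * (u\<^sup>2 + v\<^sup>2) = \<kappa> * u\<^sup>2 + \<kappa> * v\<^sup>2"
    "s * P * u\<^sup>2 = s * P / 2 * u\<^sup>2 + s * P / 2 * u\<^sup>2"
    by (simp_all add: algebra_simps)
  ultimately show ?thesis using cross unfolding \<kappa>_def[symmetric] by linarith
qed

lemma abs_mult_le_sq_sum:
  fixes A B u v c1 c2 :: real
  assumes "\<bar>A\<bar> \<le> c1 * (\<bar>u\<bar> + \<bar>v\<bar>)" "\<bar>B\<bar> \<le> c2 * (\<bar>u\<bar> + \<bar>v\<bar>)" "0 \<le> c1" "0 \<le> c2"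
  shows "\<bar>A * B\<bar> \<le> 2 * c1 * c2 * (u\<^sup>2 + v\<^sup>2)"
proof -
  have "\<bar>A * B\<bar> \<le> (c1 * (\<bar>u\<bar> + \<bar>v\<bar>)) * (c2 * (\<bar>u\<bar> + \<bar>v\<bar>))"
    unfolding abs_mult using assms(1,2) by (intro mult_mono) auto
  also have "\<dots> = c1 * c2 * (\<bar>u\<bar> + \<bar>v\<bar>)\<^sup>2" by (simp add: power2_eq_square algebra_simps)
  also have "\<dots> \<le> c1 * c2 * (2 * (u\<^sup>2 + v\<^sup>2))"
  proof (rule mult_left_mono)
    show "(\<bar>u\<bar> + \<bar>v\<bar>)\<^sup>2 \<le> 2 * (u\<^sup>2 + v\<^sup>2)"
      using sum_squares_bound[of "\<bar>u\<bar>" "\<bar>v\<bar>"] power2_sum[of "\<bar>u\<bar>" "\<bar>v\<bar>"] by simp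
  qed (use assms(3,4) in simp)
  finally show ?thesis by (simp add: algebra_simps)
qed

lemma lyapunov_derivative_lower_bound:
  fixes P Q s \<epsilon> p q u v :: real
  assumes "P > 0" "Q > 0" "s > 0" "s + s * Q\<^sup>2 / (2 * P) \<le> Q"
    and "\<bar>p - P\<bar> \<le> \<epsilon>" "\<bar>q + Q\<bar> \<le> \<epsilon>" "4 * (2 + s) * \<epsilon> = min Q (s * P / 2)"
  shows "min Q (s * P / 2) / 2 * (u\<^sup>2 + v\<^sup>2)
    \<le> 2 * P * u * v + 2 * v * (- (p * u) - q * v) - s * (v * v + u * (- (p * u) - q * v))"
proof -
  define e where "e = - ((p - P) * u + (q + Q) * v)"
  have "\<bar>e\<bar> \<le> \<epsilon> * (\<bar>u\<bar> + \<bar>v\<bar>)"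
  proof -
    have "\<bar>e\<bar> \<le> \<bar>p - P\<bar> * \<bar>u\<bar> + \<bar>q + Q\<bar> * \<bar>v\<bar>"
      unfolding e_def by (simp add: abs_mult[symmetric])
    also have "\<dots> \<le> \<epsilon> * \<bar>u\<bar> + \<epsilon> * \<bar>v\<bar>"
      using assms(5,6) by (intro add_mono mult_right_mono) auto
    finally show ?thesis by (simp add: distrib_left)
  qed
  moreover have "\<bar>2 * v - s * u\<bar> \<le> (2 + s) * (\<bar>u\<bar> + \<bar>v\<bar>)"
  proof -
    have "\<bar>2 * v - s * u\<bar> \<le> 2 * \<bar>v\<bar> + s * \<bar>u\<bar>"
      using abs_triangle_ineq4[of "2 * v" "s * u"] assms(3) by (simp add: abs_mult)
    moreover have "(2 + s) * (\<bar>u\<bar> + \<bar>v\<bar>) = 2 * \<bar>v\<bar> + s * \<bar>u\<bar> + (2 * \<bar>u\<bar> + s * \<bar>v\<bar>)"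
      by (simp add: algebra_simps)
    moreover have "0 \<le> 2 * \<bar>u\<bar> + s * \<bar>v\<bar>" using assms(3) by simp
    ultimately show ?thesis by linarith
  qed
  ultimately have "\<bar>e * (2 * v - s * u)\<bar> \<le> 2 * \<epsilon> * (2 + s) * (u\<^sup>2 + v\<^sup>2)"
    using assms(3,5) by (intro abs_mult_le_sq_sum) auto
  also have "2 * \<epsilon> * (2 + s) = min Q (s * P / 2) / 2" using assms(7) by (simp add: algebra_simps)
  finally have "- (min Q (s * P / 2) / 2 * (u\<^sup>2 + v\<^sup>2)) \<le> (2 * v - s * u) * e"
    by (simp add: mult.commute)
  moreover have "min Q (s * P / 2) * (u\<^sup>2 + v\<^sup>2) \<le> s * P * u\<^sup>2 + (2 * Q - s) * v\<^sup>2 - s * Q * (u * v)"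
    using lyapunov_form_derivative_bound[OF assms(1-4)] .
  moreover have "2 * P * u * v + 2 * v * (- (p * u) - q * v) - s * (v * v + u * (- (p * u) - q * v))
      = (s * P * u\<^sup>2 + (2 * Q - s) * v\<^sup>2 - s * Q * (u * v)) + (2 * v - s * u) * e"
    unfolding e_def by (simp add: algebra_simps power2_eq_square)
  ultimately show ?thesis by linarith
qed

text \<open>Here both roots of the limiting characteristic polynomial have positive real part, and
  \<open>P w1\<^sup>2 + w2\<^sup>2 - s w1 w2\<close> is a strict Lyapunov function for the limiting system.\<close>

lemma companion_unstable_vanishes:
  fixes w1 w2 p q :: "real \<Rightarrow> real"
  assumes d1: "\<And>x. X0 \<le> x \<Longrightarrow> (w1 has_real_derivative w2 x) (at x)"
    and d2: "\<And>x. X0 \<le> x \<Longrightarrow> (w2 has_real_derivative - (p x * w1 x) - q x * w2 x) (at x)"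
    and lim_p: "(p \<longlongrightarrow> P) at_top" and lim_q: "(q \<longlongrightarrow> - Q) at_top" and "P > 0" "Q > 0"
    and lim_w1: "(w1 \<longlongrightarrow> 0) at_top" and lim_w2: "(w2 \<longlongrightarrow> 0) at_top"
  shows "\<exists>x\<ge>X0. w1 x = 0 \<and> w2 x = 0"
proof -
  define s where "s = Q * P / (P + Q\<^sup>2)"
  have s: "0 < s" "s\<^sup>2 \<le> P" "s + s * Q\<^sup>2 / (2 * P) \<le> Q"
    using lyapunov_parameter[OF \<open>P > 0\<close> \<open>Q > 0\<close>] by (simp_all add: s_def)
  define \<kappa> where "\<kappa> = min Q (s * P / 2)"
  have "\<kappa> > 0" using \<open>P > 0\<close> \<open>Q > 0\<close> s(1) by (simp add: \<kappa>_def)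
  define \<epsilon> where "\<epsilon> = \<kappa> / (4 * (2 + s))"
  have "\<epsilon> > 0" "4 * (2 + s) * \<epsilon> = \<kappa>" using \<open>\<kappa> > 0\<close> s(1) by (simp_all add: \<epsilon>_def)
  have "\<forall>\<^sub>F x in at_top. X0 \<le> x \<and> dist (p x) P < \<epsilon> \<and> dist (q x) (- Q) < \<epsilon>"
    using lim_p lim_q \<open>\<epsilon> > 0\<close> by (auto simp: tendsto_iff intro!: eventually_conj eventually_ge_at_top)
  then obtain X1 where X1: "\<And>x. X1 \<le> x \<Longrightarrow> X0 \<le> x \<and> \<bar>p x - P\<bar> \<le> \<epsilon> \<and> \<bar>q x + Q\<bar> \<le> \<epsilon>"
    by (force simp: eventually_at_top_linorder dist_real_def)
  define H where "H x = P * (w1 x)\<^sup>2 + (w2 x)\<^sup>2 - s * (w1 x * w2 x)" for x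
  define H' where "H' x = 2 * P * w1 x * w2 x + 2 * w2 x * (- (p x * w1 x) - q x * w2 x)
       - s * (w2 x * w2 x + w1 x * (- (p x * w1 x) - q x * w2 x))" for x
  define C where "C = P + 1 + s"
  have "C > 0" using \<open>P > 0\<close> s(1) by (simp add: C_def)
  have "H X1 \<le> 0"
  proof (rule nonpos_if_growing_and_tendsto_zero[of X1 H H' "\<kappa> / (2 * C)"])
    show "(H has_real_derivative H' x) (at x)" if "X1 \<le> x" for x
      unfolding H_def H'_def using X1[OF that]
      by (auto intro!: derivative_eq_intros d1 d2 simp: power2_eq_square algebra_simps)
    show "\<kappa> / (2 * C) * H x \<le> H' x" if "X1 \<le> x" for x
    proof -
      have "\<kappa> / (2 * C) * H x \<le> \<kappa> / (2 * C) * (C * ((w1 x)\<^sup>2 + (w2 x)\<^sup>2))"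
        using lyapunov_form_bounds(2)[OF \<open>P > 0\<close> s(1,2)] \<open>\<kappa> > 0\<close> \<open>C > 0\<close>
        by (intro mult_left_mono) (auto simp: H_def C_def)
      also have "\<dots> = \<kappa> / 2 * ((w1 x)\<^sup>2 + (w2 x)\<^sup>2)" using \<open>C > 0\<close> by simp
      also have "\<dots> \<le> H' x"
        unfolding H'_def \<kappa>_def using X1[OF that] \<open>4 * (2 + s) * \<epsilon> = \<kappa>\<close>
        by (intro lyapunov_derivative_lower_bound[OF \<open>P > 0\<close> \<open>Q > 0\<close> s(1,3)]) (auto simp: \<kappa>_def)
      finally show ?thesis .
    qed
    show "(H \<longlongrightarrow> 0) at_top" unfolding H_def by (auto intro!: tendsto_eq_intros lim_w1 lim_w2)
  qed (use \<open>\<kappa> > 0\<close> \<open>C > 0\<close> in auto)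
  moreover have "P / 2 * (w1 X1)\<^sup>2 + (w2 X1)\<^sup>2 / 2 \<le> H X1"
    using lyapunov_form_bounds(1)[OF \<open>P > 0\<close> s(1,2)] by (simp add: H_def)
  moreover have "0 \<le> P / 2 * (w1 X1)\<^sup>2" "0 \<le> (w2 X1)\<^sup>2 / 2" using \<open>P > 0\<close> by simp_all
  ultimately have "P / 2 * (w1 X1)\<^sup>2 = 0" "(w2 X1)\<^sup>2 / 2 = 0" by linarith+
  then have "w1 X1 = 0 \<and> w2 X1 = 0" using \<open>P > 0\<close> by simp
  then show ?thesis using X1[of X1] by blast
qed

lemma companion_reflect:
  fixes w1 w2 p q :: "real \<Rightarrow> real"
  assumes d1: "\<And>x. (w1 has_real_derivative w2 x) (at x)"
    and d2: "\<And>x. (w2 has_real_derivative - (p x * w1 x) - q x * w2 x) (at x)"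
  shows "((\<lambda>t. w1 (- t)) has_real_derivative - w2 (- t)) (at t)"
    and "((\<lambda>t. - w2 (- t)) has_real_derivative
           - (p (- t) * w1 (- t)) - (- q (- t)) * (- w2 (- t))) (at t)"
proof -
  show "((\<lambda>t. w1 (- t)) has_real_derivative - w2 (- t)) (at t)"
    using DERIV_chain2[OF d1 DERIV_minus[OF DERIV_ident]] by simp
  have "((\<lambda>t. - w2 (- t)) has_real_derivative - ((- (p (- t) * w1 (- t)) - q (- t) * w2 (- t)) * - 1)) (at t)"
    by (rule DERIV_minus[OF DERIV_chain2[OF d2 DERIV_minus[OF DERIV_ident]]])
  then show "((\<lambda>t. - w2 (- t)) has_real_derivative
      - (p (- t) * w1 (- t)) - (- q (- t)) * (- w2 (- t))) (at t)"
    by (simp add: algebra_simps)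
qed

section \<open>Exponentially decaying functions and Sobolev spaces\<close>

lemma integrable_exp_neg_abs:
  fixes a :: real
  assumes "a > 0"
  shows "integrable lborel (\<lambda>x. exp (- a * \<bar>x\<bar>))"
proof -
  define h where "h x = indicator {0..} x *\<^sub>R exp (- a * x)" for x :: real
  have hm: "h \<in> borel_measurable borel" unfolding h_def
    by (intro borel_measurable_continuous_on_indicator continuous_intros) auto
  have "integrable lebesgue h" unfolding h_def using assms
    by (intro nonnegative_absolutely_integrable_1 [unfolded set_integrable_def] integrable_on_exp_minus_to_infinity) auto
  then have i1: "integrable lborel h"
    using integrable_completion[of h lborel] hm by simp
  have i2: "integrable lborel (\<lambda>x. h (0 + (- 1) * x))"
    using lborel_integrable_real_affine_iff[of "- 1" h 0] i1 by simp
  have "integrable lborel (\<lambda>x. h x + h (0 + (- 1) * x))" using i1 i2 by simp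
  then show ?thesis
  proof (rule Bochner_Integration.integrable_bound)
    show "(\<lambda>x. exp (- a * \<bar>x\<bar>)) \<in> borel_measurable lborel"
      by measurable
    show "AE x in lborel. norm (exp (- a * \<bar>x\<bar>)) \<le> norm (h x + h (0 + - 1 * x))"
      by (intro AE_I2) (auto simp: h_def indicator_def abs_if)
  qed
qed

definition exp_decaying :: "(real \<Rightarrow> 'a::real_normed_vector) \<Rightarrow> bool" where
  "exp_decaying g \<longleftrightarrow> continuous_on UNIV g \<and>
     (\<exists>K \<kappa> X. \<kappa> > 0 \<and> (\<forall>x. X \<le> \<bar>x\<bar> \<longrightarrow> norm (g x) \<le> K * exp (- \<kappa> * \<bar>x\<bar>)))"

lemma exp_decayingI:
  assumes "continuous_on UNIV g" "\<kappa> > 0" "\<And>x. X \<le> \<bar>x\<bar> \<Longrightarrow> norm (g x) \<le> K * exp (- \<kappa> * \<bar>x\<bar>)"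
  shows "exp_decaying g"
  using assms unfolding exp_decaying_def by blast

lemma exp_decaying_bounded:
  assumes "exp_decaying g"
  shows "bounded (range g)"
proof -
  obtain K \<kappa> X where k: "\<kappa> > 0" and b: "\<And>x. X \<le> \<bar>x\<bar> \<Longrightarrow> norm (g x) \<le> K * exp (- \<kappa> * \<bar>x\<bar>)"
    using assms unfolding exp_decaying_def by blast
  have "norm (g x) \<le> \<bar>K\<bar>" if "X \<le> \<bar>x\<bar>" for x
  proof -
    have "K * exp (- \<kappa> * \<bar>x\<bar>) \<le> \<bar>K\<bar> * exp (- \<kappa> * \<bar>x\<bar>)" by (simp add: mult_right_mono)
    also have "\<dots> \<le> \<bar>K\<bar> * 1" using k by (intro mult_left_mono) auto
    finally show ?thesis using b[OF that] by simp
  qed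
  then show ?thesis using bounded_range_if_bounded_outside assms unfolding exp_decaying_def by blast
qed

lemma exp_decaying_L2:
  fixes g :: "real \<Rightarrow> 'a::{banach, second_countable_topology}"
  assumes "exp_decaying g"
  shows "L2 g"
proof -
  have cont: "continuous_on UNIV g" using assms unfolding exp_decaying_def by blast
  obtain K \<kappa> X where k: "\<kappa> > 0" and b: "\<And>x. X \<le> \<bar>x\<bar> \<Longrightarrow> norm (g x) \<le> K * exp (- \<kappa> * \<bar>x\<bar>)"
    using assms unfolding exp_decaying_def by blast
  obtain M where M: "\<And>x. norm (g x) \<le> M" using exp_decaying_bounded[OF assms] by (auto simp: bounded_iff)
  have meas: "g \<in> borel_measurable lborel" using borel_measurable_continuous_onI[OF cont] by simp
  have "integrable lborel (\<lambda>x. M\<^sup>2 * indicator {-X..X} x + K\<^sup>2 * exp (- (2 * \<kappa>) * \<bar>x\<bar>))"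
  proof (intro Bochner_Integration.integrable_add integrable_mult_right)
    show "integrable lborel (\<lambda>x. exp (- (2 * \<kappa>) * \<bar>x\<bar>))" using k by (intro integrable_exp_neg_abs) simp
    show "integrable lborel (indicat_real {- X..X})" by (intro integrable_real_indicator) (auto simp: emeasure_lborel_Icc_eq)
  qed
  then have "integrable lborel (\<lambda>x. (norm (g x))\<^sup>2)"
  proof (rule Bochner_Integration.integrable_bound)
    show "(\<lambda>x. (norm (g x))\<^sup>2) \<in> borel_measurable lborel" using meas by measurable
    show "AE x in lborel. norm ((norm (g x))\<^sup>2) \<le> norm (M\<^sup>2 * indicator {-X..X} x + K\<^sup>2 * exp (- (2 * \<kappa>) * \<bar>x\<bar>))"
    proof (intro AE_I2)
      fix x
      have nn: "0 \<le> M\<^sup>2 * indicator {-X..X} x + K\<^sup>2 * exp (- (2 * \<kappa>) * \<bar>x\<bar>)" by (simp add: indicator_def)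
      have "(norm (g x))\<^sup>2 \<le> M\<^sup>2 * indicator {-X..X} x + K\<^sup>2 * exp (- (2 * \<kappa>) * \<bar>x\<bar>)"
      proof (cases "X \<le> \<bar>x\<bar>")
        case True
        have "(norm (g x))\<^sup>2 \<le> (K * exp (- \<kappa> * \<bar>x\<bar>))\<^sup>2" using b[OF True] by (intro power_mono) auto
        also have "\<dots> = K\<^sup>2 * exp (- (2 * \<kappa>) * \<bar>x\<bar>)"
          by (simp add: power_mult_distrib power2_eq_square flip: exp_add)
        also have "\<dots> \<le> M\<^sup>2 * indicator {-X..X} x + K\<^sup>2 * exp (- (2 * \<kappa>) * \<bar>x\<bar>)"
          by (simp add: indicator_def)
        finally show ?thesis .
      next
        case False
        then have "x \<in> {-X..X}" by auto
        then have "(norm (g x))\<^sup>2 \<le> M\<^sup>2 * indicator {-X..X} x"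
          using M[of x] by (simp add: power_mono)
        also have "\<dots> \<le> M\<^sup>2 * indicator {-X..X} x + K\<^sup>2 * exp (- (2 * \<kappa>) * \<bar>x\<bar>)" by simp
        finally show ?thesis .
      qed
      then show "norm ((norm (g x))\<^sup>2) \<le> norm (M\<^sup>2 * indicator {-X..X} x + K\<^sup>2 * exp (- (2 * \<kappa>) * \<bar>x\<bar>))"
        using nn by simp
    qed
  qed
  then show ?thesis unfolding L2_def using meas by simp
qed

lemma exp_decaying_add:
  assumes "exp_decaying g1" "exp_decaying g2"
  shows "exp_decaying (\<lambda>x. g1 x + g2 x)"
proof -
  obtain K1 k1 X1 where k1: "k1 > 0" and b1: "\<And>x. X1 \<le> \<bar>x\<bar> \<Longrightarrow> norm (g1 x) \<le> K1 * exp (- k1 * \<bar>x\<bar>)"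
    using assms(1) unfolding exp_decaying_def by blast
  obtain K2 k2 X2 where k2: "k2 > 0" and b2: "\<And>x. X2 \<le> \<bar>x\<bar> \<Longrightarrow> norm (g2 x) \<le> K2 * exp (- k2 * \<bar>x\<bar>)"
    using assms(2) unfolding exp_decaying_def by blast
  have c: "continuous_on UNIV (\<lambda>x. g1 x + g2 x)" using assms unfolding exp_decaying_def by (auto intro!: continuous_intros)
  define k where "k = min k1 k2"
  have le: "K * exp (- k' * \<bar>x\<bar>) \<le> \<bar>K\<bar> * exp (- k * \<bar>x\<bar>)" if "k \<le> k'" for K k' x
  proof -
    have "K * exp (- k' * \<bar>x\<bar>) \<le> \<bar>K\<bar> * exp (- k' * \<bar>x\<bar>)" by (simp add: mult_right_mono)
    also have "\<dots> \<le> \<bar>K\<bar> * exp (- k * \<bar>x\<bar>)" using that by (intro mult_left_mono) (auto intro: mult_right_mono)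
    finally show ?thesis .
  qed
  show ?thesis
  proof (rule exp_decayingI[OF c, of k "max X1 X2" "\<bar>K1\<bar> + \<bar>K2\<bar>"])
    show "k > 0" using k1 k2 by (simp add: k_def)
    fix x assume x: "max X1 X2 \<le> \<bar>x\<bar>"
    have "norm (g1 x + g2 x) \<le> norm (g1 x) + norm (g2 x)" by (rule norm_triangle_ineq)
    also have "\<dots> \<le> K1 * exp (- k1 * \<bar>x\<bar>) + K2 * exp (- k2 * \<bar>x\<bar>)" using b1 b2 x by (intro add_mono) auto
    also have "\<dots> \<le> \<bar>K1\<bar> * exp (- k * \<bar>x\<bar>) + \<bar>K2\<bar> * exp (- k * \<bar>x\<bar>)"
      by (intro add_mono le) (auto simp: k_def)
    finally show "norm (g1 x + g2 x) \<le> (\<bar>K1\<bar> + \<bar>K2\<bar>) * exp (- k * \<bar>x\<bar>)" by (simp add: algebra_simps)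
  qed
qed

lemma exp_decaying_scale:
  fixes h :: "real \<Rightarrow> real"
  assumes "exp_decaying g" "continuous_on UNIV h" "\<And>x. \<bar>h x\<bar> \<le> B"
  shows "exp_decaying (\<lambda>x. h x *\<^sub>R g x)"
proof -
  obtain K k X where k: "k > 0" and b: "\<And>x. X \<le> \<bar>x\<bar> \<Longrightarrow> norm (g x) \<le> K * exp (- k * \<bar>x\<bar>)"
    using assms(1) unfolding exp_decaying_def by blast
  have c: "continuous_on UNIV (\<lambda>x. h x *\<^sub>R g x)" using assms unfolding exp_decaying_def by (auto intro!: continuous_intros)
  show ?thesis
  proof (rule exp_decayingI[OF c k, of X "B * K"])
    fix x assume x: "X \<le> \<bar>x\<bar>"
    have "norm (h x *\<^sub>R g x) = \<bar>h x\<bar> * norm (g x)" by simp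
    also have "\<dots> \<le> B * (K * exp (- k * \<bar>x\<bar>))"
      using assms(3)[of x] b[OF x] by (intro mult_mono) auto
    finally show "norm (h x *\<^sub>R g x) \<le> B * K * exp (- k * \<bar>x\<bar>)" by (simp add: mult.assoc)
  qed
qed

lemma exp_decaying_of_real:
  fixes g :: "real \<Rightarrow> real"
  assumes "exp_decaying g"
  shows "exp_decaying (\<lambda>x. complex_of_real (g x))"
  using assms unfolding exp_decaying_def by (auto intro!: continuous_intros)

lemma exp_decaying_vec2:
  fixes g1 g2 :: "real \<Rightarrow> 'a::real_normed_vector"
  assumes "exp_decaying g1" "exp_decaying g2"
  shows "exp_decaying (\<lambda>x. (\<chi> i::2. if i = 1 then g1 x else g2 x))"
proof -
  have "exp_decaying (\<lambda>x. norm (g1 x) + norm (g2 x))"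
    using exp_decaying_add[of "\<lambda>x. norm (g1 x)" "\<lambda>x. norm (g2 x)"] assms
    unfolding exp_decaying_def by (auto intro!: continuous_intros)
  then obtain K k X where k: "k > 0" and b: "\<And>x. X \<le> \<bar>x\<bar> \<Longrightarrow> norm (norm (g1 x) + norm (g2 x)) \<le> K * exp (- k * \<bar>x\<bar>)"
    unfolding exp_decaying_def by blast
  have c: "continuous_on UNIV (\<lambda>x. (\<chi> i::2. if i = 1 then g1 x else g2 x))"
  proof (rule continuous_on_vec_lambda)
    fix i :: 2
    show "continuous_on UNIV (\<lambda>x. if i = 1 then g1 x else g2 x)"
      using assms unfolding exp_decaying_def by (cases "i = 1") auto
  qed
  show ?thesis
  proof (rule exp_decayingI[OF c k, of X K])
    fix x assume x: "X \<le> \<bar>x\<bar>"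
    have "norm (\<chi> i::2. if i = 1 then g1 x else g2 x) \<le> (\<Sum>i\<in>UNIV. norm ((\<chi> i::2. if i = 1 then g1 x else g2 x) $ i))"
      unfolding norm_vec_def by (rule L2_set_le_sum) simp
    also have "\<dots> = norm (g1 x) + norm (g2 x)" by (simp add: sum_2)
    also have "\<dots> \<le> K * exp (- k * \<bar>x\<bar>)" using b[OF x] by simp
    finally show "norm (\<chi> i::2. if i = 1 then g1 x else g2 x) \<le> K * exp (- k * \<bar>x\<bar>)" .
  qed
qed

lemma lebesgue_integral_eq_integral_Icc:
  fixes h :: "real \<Rightarrow> 'a::euclidean_space"
  assumes "continuous_on UNIV h" "\<And>x. x \<notin> {a..b} \<Longrightarrow> h x = 0"
  shows "(LINT x|lborel. h x) = integral {a..b} h"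
proof -
  have "(\<lambda>x. h x) = (\<lambda>x. indicator {a..b} x *\<^sub>R h x)"
    using assms(2) by (auto simp: indicator_def)
  then have "(LINT x|lborel. h x) = (LINT x : {a..b} | lborel. h x)"
    unfolding set_lebesgue_integral_def by metis
  also have "\<dots> = integral {a..b} h"
    by (rule set_borel_integral_eq_integral(2)[OF borel_integrable_atLeastAtMost'])
       (rule continuous_on_subset[OF assms(1)], simp)
  finally show ?thesis .
qed

lemma test_fun_deriv:
  assumes "test_fun \<phi>"
  shows "(\<phi> has_real_derivative deriv \<phi> x) (at x)" and "continuous_on UNIV (deriv \<phi>)"
proof -
  have "((deriv ^^ n) \<phi>) differentiable (at x)" for n x
    using assms unfolding test_fun_def smooth_fun_def by blast
  from this[of 0] this[of 1]
  show "(\<phi> has_real_derivative deriv \<phi> x) (at x)" "continuous_on UNIV (deriv \<phi>)"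
    by (auto simp: DERIV_deriv_iff_real_differentiable
        intro!: continuous_at_imp_continuous_on differentiable_imp_continuous_within)
qed

lemma test_fun_vanishes_outside:
  assumes "test_fun \<phi>"
  obtains B where "\<And>x. B < \<bar>x\<bar> \<Longrightarrow> \<phi> x = 0 \<and> deriv \<phi> x = 0"
proof -
  obtain B where B: "\<And>x. x \<in> closure {x. \<phi> x \<noteq> 0} \<Longrightarrow> norm x \<le> B"
    using assms compact_imp_bounded bounded_iff unfolding test_fun_def by metis
  have \<phi>0: "\<phi> x = 0" if "B < \<bar>x\<bar>" for x
    using B[of x] closure_subset[of "{x. \<phi> x \<noteq> 0}"] that by force
  have "deriv \<phi> x = 0" if "B < \<bar>x\<bar>" for x
  proof -
    have "open {y::real. B < \<bar>y\<bar>}" by (rule open_Collect_less) (auto intro!: continuous_intros)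
    then have "(\<phi> has_real_derivative 0) (at x)"
      by (rule has_field_derivative_transform_within_open[of "\<lambda>_. 0", rotated]) (use that \<phi>0 in auto)
    then show ?thesis using test_fun_deriv(1)[OF assms, of x] DERIV_unique by blast
  qed
  then show ?thesis using \<phi>0 that by blast
qed

lemma weak_deriv_if_has_vector_derivative:
  fixes g g' :: "real \<Rightarrow> 'a::euclidean_space"
  assumes der: "\<And>x. (g has_vector_derivative g' x) (at x)" and cg': "continuous_on UNIV g'"
  shows "weak_deriv g g'"
  unfolding weak_deriv_def
proof (intro allI impI)
  fix \<phi> :: "real \<Rightarrow> real"
  assume "test_fun \<phi>"
  note \<phi>' = test_fun_deriv[OF \<open>test_fun \<phi>\<close>]
  obtain B where B: "\<And>x. B < \<bar>x\<bar> \<Longrightarrow> \<phi> x = 0 \<and> deriv \<phi> x = 0"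
    using test_fun_vanishes_outside[OF \<open>test_fun \<phi>\<close>] by blast
  have c\<phi>: "continuous_on UNIV \<phi>" using \<phi>'(1) by (meson DERIV_continuous continuous_at_imp_continuous_on)
  have cg: "continuous_on UNIV g"
    using der by (meson has_vector_derivative_continuous continuous_at_imp_continuous_on)
  define a b where "a = - \<bar>B\<bar> - 1" and "b = \<bar>B\<bar> + 1"
  have out: "B < \<bar>x\<bar>" if "x \<notin> {a..b}" for x using that by (auto simp: a_def b_def)
  define I where "I = integral {a..b} (\<lambda>x. \<phi> x *\<^sub>R g' x)"
  have "((\<lambda>x. \<phi> x *\<^sub>R g' x) has_integral I) {a..b}"
    unfolding I_def
    by (intro integrable_integral integrable_continuous_interval continuous_intros
        continuous_on_subset[OF c\<phi>] continuous_on_subset[OF cg']) auto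
  then have "((\<lambda>x. deriv \<phi> x *\<^sub>R g x) has_integral - I) {a..b}"
    using B[of a] B[of b] \<phi>'(1) der
    by (intro integration_by_parts[OF bounded_bilinear_scaleR, of a b \<phi> g])
       (auto simp: a_def b_def has_real_derivative_iff_has_vector_derivative
         intro: continuous_on_subset[OF c\<phi>] continuous_on_subset[OF cg])
  moreover have "(LINT x|lborel. deriv \<phi> x *\<^sub>R g x) = integral {a..b} (\<lambda>x. deriv \<phi> x *\<^sub>R g x)"
    by (rule lebesgue_integral_eq_integral_Icc) (use B out in \<open>auto intro!: continuous_intros \<phi>'(2) cg\<close>)
  moreover have "(LINT x|lborel. \<phi> x *\<^sub>R g' x) = I"
    unfolding I_def
    by (rule lebesgue_integral_eq_integral_Icc) (use B out in \<open>auto intro!: continuous_intros c\<phi> cg'\<close>)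
  ultimately show "(LINT x|lborel. deriv \<phi> x *\<^sub>R g x) = - (LINT x|lborel. \<phi> x *\<^sub>R g' x)"
    using integral_unique by simp
qed

lemma exp_decaying_if_sq_bound:
  fixes g :: "real \<Rightarrow> real"
  assumes "continuous_on UNIV g" "\<kappa> > 0" "\<And>x. X \<le> \<bar>x\<bar> \<Longrightarrow> (g x)\<^sup>2 \<le> K * exp (- \<kappa> * \<bar>x\<bar>)"
  shows "exp_decaying g"
proof (rule exp_decayingI[OF assms(1), of "\<kappa> / 2" X "sqrt K"])
  show "\<kappa> / 2 > 0" using assms(2) by simp
  fix x assume x: "X \<le> \<bar>x\<bar>"
  have "\<bar>g x\<bar> = sqrt ((g x)\<^sup>2)" by simp
  also have "\<dots> \<le> sqrt (K * exp (- \<kappa> * \<bar>x\<bar>))" using assms(3)[OF x] by (rule real_sqrt_le_mono)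
  also have "\<dots> = sqrt K * sqrt (exp (- \<kappa> * \<bar>x\<bar>))" by (simp add: real_sqrt_mult)
  also have "sqrt (exp (- \<kappa> * \<bar>x\<bar>)) = exp (- (\<kappa> / 2) * \<bar>x\<bar>)"
  proof -
    have "exp (- \<kappa> * \<bar>x\<bar>) = (exp (- (\<kappa> / 2) * \<bar>x\<bar>))\<^sup>2"
      by (simp add: power2_eq_square flip: exp_add)
    then show ?thesis by simp
  qed
  finally show "norm (g x) \<le> sqrt K * exp (- (\<kappa> / 2) * \<bar>x\<bar>)" by simp
qed

lemma exp_decaying_if_sq_decay_at_both_ends:
  fixes g :: "real \<Rightarrow> real"
  assumes "continuous_on UNIV g"
    and top: "\<exists>K \<kappa> X. 0 < \<kappa> \<and> (\<forall>x\<ge>X. (g x)\<^sup>2 \<le> K * exp (- \<kappa> * x))"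
    and bot: "\<exists>K \<kappa> X. 0 < \<kappa> \<and> (\<forall>x\<ge>X. (g (- x))\<^sup>2 \<le> K * exp (- \<kappa> * x))"
  shows "exp_decaying g"
proof -
  obtain K1 \<kappa>1 X1 where "0 < \<kappa>1" and b1: "\<And>x. X1 \<le> x \<Longrightarrow> (g x)\<^sup>2 \<le> K1 * exp (- \<kappa>1 * x)"
    using top by blast
  obtain K2 \<kappa>2 X2 where "0 < \<kappa>2" and b2: "\<And>x. X2 \<le> x \<Longrightarrow> (g (- x))\<^sup>2 \<le> K2 * exp (- \<kappa>2 * x)"
    using bot by blast
  define \<kappa> where "\<kappa> = min \<kappa>1 \<kappa>2"
  have weaken: "K' * exp (- \<kappa>' * \<bar>x\<bar>) \<le> (\<bar>K1\<bar> + \<bar>K2\<bar>) * exp (- \<kappa> * \<bar>x\<bar>)"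
    if "\<kappa> \<le> \<kappa>'" "\<bar>K'\<bar> \<le> \<bar>K1\<bar> + \<bar>K2\<bar>" for K' \<kappa>' x
  proof -
    have "K' * exp (- \<kappa>' * \<bar>x\<bar>) \<le> \<bar>K'\<bar> * exp (- \<kappa>' * \<bar>x\<bar>)" by (simp add: mult_right_mono)
    also have "\<dots> \<le> (\<bar>K1\<bar> + \<bar>K2\<bar>) * exp (- \<kappa> * \<bar>x\<bar>)"
      using that by (intro mult_mono) (auto intro: mult_right_mono)
    finally show ?thesis .
  qed
  show ?thesis
  proof (rule exp_decaying_if_sq_bound[OF assms(1)])
    show "0 < \<kappa>" using \<open>0 < \<kappa>1\<close> \<open>0 < \<kappa>2\<close> by (simp add: \<kappa>_def)
    fix x assume x: "max X1 X2 \<le> \<bar>x\<bar>"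
    show "(g x)\<^sup>2 \<le> (\<bar>K1\<bar> + \<bar>K2\<bar>) * exp (- \<kappa> * \<bar>x\<bar>)"
    proof (cases "0 \<le> x")
      case True
      then have "(g x)\<^sup>2 \<le> K1 * exp (- \<kappa>1 * \<bar>x\<bar>)" using b1[of x] x by simp
      also have "\<dots> \<le> (\<bar>K1\<bar> + \<bar>K2\<bar>) * exp (- \<kappa> * \<bar>x\<bar>)" by (rule weaken) (auto simp: \<kappa>_def)
      finally show ?thesis .
    next
      case False
      then have "(g x)\<^sup>2 \<le> K2 * exp (- \<kappa>2 * \<bar>x\<bar>)" using b2[of "- x"] x by simp
      also have "\<dots> \<le> (\<bar>K1\<bar> + \<bar>K2\<bar>) * exp (- \<kappa> * \<bar>x\<bar>)" by (rule weaken) (auto simp: \<kappa>_def)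
      finally show ?thesis .
    qed
  qed
qed

section \<open>The traveling wave\<close>

locale bistable_wave =
  fixes f U V :: "real \<Rightarrow> real" and \<tau> c :: real
  assumes smooth: "smooth_fun f" and bistable: "bistable f"
    and tau_pos: "0 < \<tau>" and tau_less: "\<tau> < tau_m f"
    and wave: "traveling_wave f \<tau> c U V"
begin

definition "f' = deriv f"

definition "f'' = deriv (deriv f)"

definition "a0 = 1 - c\<^sup>2 * \<tau>"

lemma f_deriv: "(f has_real_derivative f' x) (at x)"
  using smooth unfolding smooth_fun_def f'_def
  by (metis DERIV_deriv_iff_real_differentiable funpow_0)

lemma f'_deriv: "(f' has_real_derivative f'' x) (at x)"
proof -
  have "((deriv ^^ 1) f) differentiable (at x)" using smooth unfolding smooth_fun_def by blast
  then show ?thesis unfolding f'_def f''_def by (simp add: DERIV_deriv_iff_real_differentiable)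
qed

lemma continuous_f'': "continuous_on UNIV f''"
proof -
  have "((deriv ^^ 2) f) differentiable (at x)" for x using smooth unfolding smooth_fun_def by blast
  then show ?thesis unfolding f''_def
    by (simp add: numeral_2_eq_2 differentiable_imp_continuous_within continuous_at_imp_continuous_on)
qed

lemma isCont_f: "isCont f x" using f_deriv DERIV_isCont by blast

lemma isCont_f': "isCont f' x" using f'_deriv DERIV_isCont by blast

lemma isCont_f'': "isCont f'' x" using continuous_f'' by (simp add: continuous_on_eq_continuous_at)

lemma U_deriv: "(U has_real_derivative deriv U x) (at x)"
  and V_deriv: "(V has_real_derivative deriv V x) (at x)"
  using wave unfolding traveling_wave_def by (simp_all add: DERIV_deriv_iff_real_differentiable)

lemma wave_eq1: "c * deriv U x + deriv V x + f (U x) = 0"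
  and wave_eq2: "deriv U x + c * \<tau> * deriv V x - V x = 0"
  using wave unfolding traveling_wave_def by blast+

lemma lim_U_bot: "(U \<longlongrightarrow> 0) at_bot" and lim_V_bot: "(V \<longlongrightarrow> 0) at_bot"
  and lim_U_top: "(U \<longlongrightarrow> 1) at_top" and lim_V_top: "(V \<longlongrightarrow> 0) at_top"
  using wave unfolding traveling_wave_def by blast+

lemma continuous_U: "continuous_on UNIV U"
  using U_deriv by (meson DERIV_continuous continuous_at_imp_continuous_on)

lemma a0_deriv_U: "a0 * deriv U x = V x + c * \<tau> * f (U x)"
proof -
  have "deriv V x = - f (U x) - c * deriv U x" using wave_eq1[of x] by linarith
  then have "deriv U x + c * \<tau> * (- f (U x) - c * deriv U x) - V x = 0"
    using wave_eq2[of x] by simp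
  then have "deriv U x - c * \<tau> * f (U x) - c * c * \<tau> * deriv U x - V x = 0"
    by (simp add: algebra_simps)
  then show ?thesis unfolding a0_def power2_eq_square left_diff_distrib mult_1 by linarith
qed

lemma bistable_roots: "\<exists>\<alpha>. 0 < \<alpha> \<and> \<alpha> < 1 \<and> f \<alpha> = 0"
  and f_0: "f 0 = 0" and f_1: "f 1 = 0" and f'_0: "f' 0 < 0" and f'_1: "f' 1 < 0"
  using bistable unfolding bistable_def f'_def by blast+

lemma one_minus_tau_f'_pos:
  assumes "s \<in> {0..1}"
  shows "0 < 1 - \<tau> * f' s"
proof -
  define M where "M = (SUP s\<in>{0..1}. \<bar>f' s\<bar>)"
  have "compact ((\<lambda>s. \<bar>f' s\<bar>) ` {0..1})"
    using isCont_f' by (intro compact_continuous_image continuous_at_imp_continuous_on) (auto intro!: continuous_intros)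
  then have bdd: "bdd_above ((\<lambda>s. \<bar>f' s\<bar>) ` {0..1})"
    by (simp add: bounded_imp_bdd_above compact_imp_bounded)
  have "\<bar>f' s\<bar> \<le> M" "\<bar>f' 0\<bar> \<le> M" unfolding M_def using assms bdd by (auto intro: cSUP_upper)
  then have "M > 0" using f'_0 by linarith
  have "\<tau> < 1 / M" using tau_less unfolding tau_m_def M_def f'_def by simp
  then have "\<tau> * M < 1" using \<open>M > 0\<close> by (simp add: field_simps)
  moreover have "\<tau> * f' s \<le> \<tau> * M"
    using \<open>\<bar>f' s\<bar> \<le> M\<close> tau_pos by (intro mult_left_mono) auto
  ultimately show ?thesis by linarith
qed

lemma U_not_constant: "\<not> (\<forall>x. U x = k)"
proof
  assume "\<forall>x. U x = k"
  then have "((\<lambda>_::real. k) \<longlongrightarrow> 0) at_bot" "((\<lambda>_::real. k) \<longlongrightarrow> 1) at_top"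
    using lim_U_bot lim_U_top by (metis ext)+
  then show False
    using tendsto_const_iff[OF trivial_limit_at_bot_linorder]
      tendsto_const_iff[OF trivial_limit_at_top_linorder] by (metis zero_neq_one)
qed

lemma deriv_U_linear_near_root:
  assumes first_order: "\<And>x. c * (1 - \<tau> * f' (U x)) * deriv U x = - f (U x)"
    and "c \<noteq> 0" and "0 < \<alpha>" "\<alpha> < 1" "f \<alpha> = 0" and "U y = \<alpha>"
  shows "\<exists>r>0. \<exists>L. \<forall>t. \<bar>t - y\<bar> < r \<longrightarrow> \<bar>deriv U t\<bar> \<le> L * \<bar>U t - \<alpha>\<bar>"
proof -
  define \<kappa> where "\<kappa> = 1 - \<tau> * f' \<alpha>"
  have "\<kappa> > 0" using one_minus_tau_f'_pos[of \<alpha>] \<open>0 < \<alpha>\<close> \<open>\<alpha> < 1\<close> by (simp add: \<kappa>_def)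
  obtain \<delta> K where "\<delta> > 0" and lin: "\<And>s. \<bar>s - \<alpha>\<bar> < \<delta> \<Longrightarrow> \<bar>f s\<bar> \<le> K * \<bar>s - \<alpha>\<bar>"
    using abs_le_linear_near_zero[OF f_deriv isCont_f' \<open>f \<alpha> = 0\<close>] by blast
  obtain \<delta>' where "\<delta>' > 0" and \<delta>': "\<And>s. \<bar>s - \<alpha>\<bar> < \<delta>' \<Longrightarrow> \<bar>f' s - f' \<alpha>\<bar> < \<kappa> / (2 * \<tau>)"
    using isCont_f'[of \<alpha>, unfolded continuous_at_eps_delta, rule_format, of "\<kappa> / (2 * \<tau>)"]
      \<open>\<kappa> > 0\<close> tau_pos by (auto simp: dist_real_def)
  obtain r where "r > 0" and r: "\<And>t. \<bar>t - y\<bar> < r \<Longrightarrow> \<bar>U t - \<alpha>\<bar> < min \<delta> \<delta>'"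
    using continuous_U[unfolded continuous_on_eq_continuous_at[OF open_UNIV], rule_format, of y,
        unfolded continuous_at_eps_delta, rule_format, of "min \<delta> \<delta>'"]
      \<open>\<delta> > 0\<close> \<open>\<delta>' > 0\<close> \<open>U y = \<alpha>\<close> by (auto simp: dist_real_def)
  have "\<bar>deriv U t\<bar> \<le> (2 * K / (\<bar>c\<bar> * \<kappa>)) * \<bar>U t - \<alpha>\<bar>" if t: "\<bar>t - y\<bar> < r" for t
  proof -
    have "\<tau> * (f' (U t) - f' \<alpha>) \<le> \<tau> * (\<kappa> / (2 * \<tau>))"
      using \<delta>'[of "U t"] r[OF t] tau_pos by (intro mult_left_mono) auto
    also have "\<dots> = \<kappa> / 2" using tau_pos by simp
    finally have "\<tau> * f' (U t) - \<tau> * f' \<alpha> \<le> \<kappa> / 2" by (simp add: right_diff_distrib)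
    moreover have "1 - \<tau> * f' (U t) = \<kappa> - (\<tau> * f' (U t) - \<tau> * f' \<alpha>)" by (simp add: \<kappa>_def)
    ultimately have "\<kappa> / 2 \<le> 1 - \<tau> * f' (U t)" by linarith
    then have "\<bar>c\<bar> * (\<kappa> / 2) * \<bar>deriv U t\<bar> \<le> \<bar>c\<bar> * (1 - \<tau> * f' (U t)) * \<bar>deriv U t\<bar>"
      by (intro mult_right_mono mult_left_mono) auto
    also have "\<dots> = \<bar>c * (1 - \<tau> * f' (U t)) * deriv U t\<bar>"
      using \<open>\<kappa> / 2 \<le> 1 - \<tau> * f' (U t)\<close> \<open>\<kappa> > 0\<close> by (simp add: abs_mult)
    also have "\<dots> \<le> K * \<bar>U t - \<alpha>\<bar>"
      using first_order[of t] lin[of "U t"] r[OF t] by simp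
    finally show ?thesis
      using \<open>c \<noteq> 0\<close> \<open>\<kappa> > 0\<close> by (simp add: field_simps)
  qed
  then show ?thesis using \<open>r > 0\<close> by blast
qed

text \<open>If \<open>a0 = 0\<close>, the wave solves the first-order equation \<open>c (1 - \<tau> f'(U)) U' = - f(U)\<close>,
  which is Lipschitz near the middle zero \<open>\<alpha>\<close> of \<open>f\<close>; since \<open>U\<close> crosses \<open>\<alpha>\<close>, uniqueness
  forces \<open>U \<equiv> \<alpha>\<close>.\<close>

lemma a0_nonzero: "a0 \<noteq> 0"
proof
  assume "a0 = 0"
  obtain \<alpha> where "0 < \<alpha>" "\<alpha> < 1" "f \<alpha> = 0" using bistable_roots by blast
  have "c \<noteq> 0" using \<open>a0 = 0\<close> by (auto simp: a0_def)
  have V_eq: "V = (\<lambda>x. - (c * \<tau> * f (U x)))" using a0_deriv_U \<open>a0 = 0\<close> by (auto simp: add_eq_0_iff)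
  have "((\<lambda>x. - (c * \<tau> * f (U x))) has_real_derivative - (c * \<tau> * (f' (U x) * deriv U x))) (at x)" for x
    by (auto intro!: derivative_eq_intros DERIV_chain2[OF f_deriv U_deriv])
  then have "deriv V x = - (c * \<tau> * (f' (U x) * deriv U x))" for x
    using V_deriv[of x] DERIV_unique unfolding V_eq by blast
  then have first_order: "c * (1 - \<tau> * f' (U x)) * deriv U x = - f (U x)" for x
    using wave_eq1[of x] by (simp add: algebra_simps)
  obtain x0 where "U x0 = \<alpha>"
    using IVT_at_bot_at_top[OF continuous_U lim_U_bot lim_U_top] \<open>0 < \<alpha>\<close> \<open>\<alpha> < 1\<close> by blast
  define E where "E t = (U t - \<alpha>)\<^sup>2" for t
  have dE: "(E has_real_derivative 2 * (U t - \<alpha>) * deriv U t) (at t)" for t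
    unfolding E_def by (auto intro!: derivative_eq_intros U_deriv simp: power2_eq_square)
  have "E x = 0" for x
  proof (rule vanishing_everywhere[OF dE])
    show "E t \<ge> 0" for t by (simp add: E_def)
    show "E x0 = 0" using \<open>U x0 = \<alpha>\<close> by (simp add: E_def)
    fix y assume "E y = 0"
    then have "U y = \<alpha>" by (simp add: E_def)
    obtain r L where "r > 0" and L: "\<And>t. \<bar>t - y\<bar> < r \<Longrightarrow> \<bar>deriv U t\<bar> \<le> L * \<bar>U t - \<alpha>\<bar>"
      using deriv_U_linear_near_root[OF first_order \<open>c \<noteq> 0\<close> \<open>0 < \<alpha>\<close> \<open>\<alpha> < 1\<close> \<open>f \<alpha> = 0\<close> \<open>U y = \<alpha>\<close>]
      by blast
    have "\<bar>2 * (U t - \<alpha>) * deriv U t\<bar> \<le> (2 * L) * E t" if "\<bar>t - y\<bar> < r" for t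
    proof -
      have "\<bar>2 * (U t - \<alpha>) * deriv U t\<bar> = 2 * \<bar>U t - \<alpha>\<bar> * \<bar>deriv U t\<bar>"
        by (simp only: abs_mult abs_numeral)
      also have "\<dots> \<le> 2 * \<bar>U t - \<alpha>\<bar> * (L * \<bar>U t - \<alpha>\<bar>)" by (intro mult_left_mono L that) simp
      also have "\<dots> = (2 * L) * \<bar>U t - \<alpha>\<bar>\<^sup>2" by (simp add: power2_eq_square mult_ac)
      finally show ?thesis by (simp add: E_def)
    qed
    then show "\<exists>r>0. \<exists>L. \<forall>t. \<bar>t - y\<bar> < r \<longrightarrow> \<bar>2 * (U t - \<alpha>) * deriv U t\<bar> \<le> L * E t"
      using \<open>r > 0\<close> by blast
  qed
  then show False using U_not_constant[of \<alpha>] by (simp add: E_def)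
qed

section \<open>The linearised equation along the wave\<close>

text \<open>\<open>U'\<close> is the derivative of the wave, expressed through the wave equations so that it can
  be differentiated again; \<open>p_U = a\<^sub>2 / a\<^sub>0\<close> and \<open>q_U = a\<^sub>1 / a\<^sub>0\<close> are the coefficients of the
  normalised linearised operator.\<close>

definition "U' x = (V x + c * \<tau> * f (U x)) / a0"

definition "U'' x = (- f (U x) - c * U' x + c * \<tau> * f' (U x) * U' x) / a0"

definition "a_U x = f' (U x)"

definition "a_U' x = f'' (U x) * U' x"

definition "p_U x = (a_U x - c * \<tau> * a_U' x) / a0"

definition "q_U x = c * (1 - \<tau> * a_U x) / a0"

lemma deriv_U_eq: "deriv U x = U' x"
  using a0_deriv_U[of x] a0_nonzero unfolding U'_def by (simp add: field_simps)

lemma U_has_deriv: "(U has_real_derivative U' x) (at x)"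
  using U_deriv[of x] deriv_U_eq by simp

lemma V_has_deriv: "(V has_real_derivative - f (U x) - c * U' x) (at x)"
proof -
  have "deriv V x = - f (U x) - c * U' x" using wave_eq1[of x] unfolding deriv_U_eq by linarith
  then show ?thesis using V_deriv[of x] by simp
qed

lemma U'_deriv: "(U' has_real_derivative U'' x) (at x)"
proof -
  have "((\<lambda>x. (V x + c * \<tau> * f (U x)) / a0) has_real_derivative
      ((- f (U x) - c * U' x) + c * \<tau> * (f' (U x) * U' x)) / a0) (at x)"
    using a0_nonzero by (auto intro!: derivative_eq_intros V_has_deriv DERIV_chain2[OF f_deriv U_has_deriv])
  then show ?thesis unfolding U'_def[abs_def] U''_def by (simp add: algebra_simps)
qed

lemma a_U_deriv: "(a_U has_real_derivative a_U' x) (at x)"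
  unfolding a_U_def[abs_def] a_U'_def using DERIV_chain2[OF f'_deriv U_has_deriv] by simp

lemma U''_deriv: "(U'' has_real_derivative - (p_U x * U' x) - q_U x * U'' x) (at x)"
proof -
  have "((\<lambda>x. (- f (U x) - c * U' x + c * \<tau> * (a_U x * U' x)) / a0) has_real_derivative
      (- (f' (U x) * U' x) - c * U'' x + c * \<tau> * (a_U' x * U' x + a_U x * U'' x)) / a0) (at x)"
    using a0_nonzero
    by (auto intro!: derivative_eq_intros DERIV_chain2[OF f_deriv U_has_deriv] U'_deriv a_U_deriv)
  moreover have "(\<lambda>x. (- f (U x) - c * U' x + c * \<tau> * (a_U x * U' x)) / a0) = U''"
    by (rule ext) (simp add: U''_def a_U_def algebra_simps)
  moreover have "(- (f' (U x) * U' x) - c * U'' x + c * \<tau> * (a_U' x * U' x + a_U x * U'' x)) / a0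
      = - (p_U x * U' x) - q_U x * U'' x"
    unfolding p_U_def q_U_def a_U_def using a0_nonzero by (simp add: field_simps)
  ultimately show ?thesis by simp
qed

lemma continuous_U': "continuous_on UNIV U'"
  and continuous_a_U: "continuous_on UNIV a_U"
  using U'_deriv a_U_deriv by (meson DERIV_continuous continuous_at_imp_continuous_on)+

lemma continuous_a_U': "continuous_on UNIV a_U'"
  unfolding a_U'_def[abs_def]
  by (intro continuous_intros continuous_on_compose2[OF continuous_f'' continuous_U] continuous_U') auto

lemma continuous_p_U: "continuous_on UNIV p_U" and continuous_q_U: "continuous_on UNIV q_U"
  unfolding p_U_def[abs_def] q_U_def[abs_def] using a0_nonzero
  by (auto intro!: continuous_intros continuous_a_U continuous_a_U')

lemma U'_tendsto_0: "(U' \<longlongrightarrow> 0) at_top" "(U' \<longlongrightarrow> 0) at_bot"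
proof -
  have "((\<lambda>x. (V x + c * \<tau> * f (U x)) / a0) \<longlongrightarrow> (0 + c * \<tau> * f 1) / a0) at_top"
    "((\<lambda>x. (V x + c * \<tau> * f (U x)) / a0) \<longlongrightarrow> (0 + c * \<tau> * f 0) / a0) at_bot"
    by (intro tendsto_intros a0_nonzero lim_V_top lim_V_bot isCont_tendsto_compose[OF isCont_f lim_U_top]
        isCont_tendsto_compose[OF isCont_f lim_U_bot])+
  then show "(U' \<longlongrightarrow> 0) at_top" "(U' \<longlongrightarrow> 0) at_bot"
    unfolding U'_def[abs_def] using f_0 f_1 by simp_all
qed

lemma U''_tendsto_0: "(U'' \<longlongrightarrow> 0) at_top" "(U'' \<longlongrightarrow> 0) at_bot"
proof -
  have "((\<lambda>x. (- f (U x) - c * U' x + c * \<tau> * f' (U x) * U' x) / a0)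
      \<longlongrightarrow> (- f 1 - c * 0 + c * \<tau> * f' 1 * 0) / a0) at_top"
    "((\<lambda>x. (- f (U x) - c * U' x + c * \<tau> * f' (U x) * U' x) / a0)
      \<longlongrightarrow> (- f 0 - c * 0 + c * \<tau> * f' 0 * 0) / a0) at_bot"
    by (intro tendsto_intros a0_nonzero U'_tendsto_0 isCont_tendsto_compose[OF isCont_f lim_U_top]
        isCont_tendsto_compose[OF isCont_f' lim_U_top] isCont_tendsto_compose[OF isCont_f lim_U_bot]
        isCont_tendsto_compose[OF isCont_f' lim_U_bot])+
  then show "(U'' \<longlongrightarrow> 0) at_top" "(U'' \<longlongrightarrow> 0) at_bot"
    unfolding U''_def[abs_def] using f_0 f_1 by simp_all
qed

lemma a_U_tendsto: "(a_U \<longlongrightarrow> f' 1) at_top" "(a_U \<longlongrightarrow> f' 0) at_bot"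
  unfolding a_U_def[abs_def]
  by (intro isCont_tendsto_compose[OF isCont_f'] lim_U_top lim_U_bot)+

lemma a_U'_tendsto_0: "(a_U' \<longlongrightarrow> 0) at_top" "(a_U' \<longlongrightarrow> 0) at_bot"
proof -
  have "((\<lambda>x. f'' (U x) * U' x) \<longlongrightarrow> f'' 1 * 0) at_top" "((\<lambda>x. f'' (U x) * U' x) \<longlongrightarrow> f'' 0 * 0) at_bot"
    by (intro tendsto_intros U'_tendsto_0 isCont_tendsto_compose[OF isCont_f''] lim_U_top lim_U_bot)+
  then show "(a_U' \<longlongrightarrow> 0) at_top" "(a_U' \<longlongrightarrow> 0) at_bot" unfolding a_U'_def[abs_def] by simp_all
qed

lemma p_U_tendsto: "(p_U \<longlongrightarrow> f' 1 / a0) at_top" "(p_U \<longlongrightarrow> f' 0 / a0) at_bot"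
proof -
  have "((\<lambda>x. (a_U x - c * \<tau> * a_U' x) / a0) \<longlongrightarrow> (f' 1 - c * \<tau> * 0) / a0) at_top"
    "((\<lambda>x. (a_U x - c * \<tau> * a_U' x) / a0) \<longlongrightarrow> (f' 0 - c * \<tau> * 0) / a0) at_bot"
    by (intro tendsto_intros a0_nonzero a_U_tendsto a_U'_tendsto_0)+
  then show "(p_U \<longlongrightarrow> f' 1 / a0) at_top" "(p_U \<longlongrightarrow> f' 0 / a0) at_bot"
    unfolding p_U_def[abs_def] by simp_all
qed

lemma q_U_tendsto: "(q_U \<longlongrightarrow> c * (1 - \<tau> * f' 1) / a0) at_top"
  "(q_U \<longlongrightarrow> c * (1 - \<tau> * f' 0) / a0) at_bot"
  unfolding q_U_def[abs_def] by (intro tendsto_intros a0_nonzero a_U_tendsto)+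

lemma U'_not_identically_zero: "\<exists>x. U' x \<noteq> 0"
proof (rule ccontr)
  assume "\<nexists>x. U' x \<noteq> 0"
  then have "U x = U 0" for x using U_has_deriv DERIV_isconst_all by (metis (full_types))
  then show False using U_not_constant by blast
qed

lemma U'_U''_no_common_zero: "\<not> (U' x = 0 \<and> U'' x = 0)"
proof
  assume "U' x = 0 \<and> U'' x = 0"
  then have "U' y = 0" for y
    using real_linear_system_vanishes[of U' "\<lambda>_. 0" "\<lambda>_. 1" U'' "\<lambda>x. - p_U x" "\<lambda>x. - q_U x" x y]
      U'_deriv U''_deriv continuous_p_U continuous_q_U
    by (auto intro!: continuous_intros)
  then show False using U'_not_identically_zero by blast
qed

text \<open>If \<open>a0 < 0\<close>, then at \<open>+\<infinity>\<close> (for \<open>c > 0\<close>) resp. \<open>-\<infinity>\<close> (for \<open>c < 0\<close>) both roots of the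
  limiting characteristic polynomial have positive real part, so \<open>U'\<close> could not tend to zero
  there.\<close>

lemma a0_pos: "a0 > 0"
proof (rule ccontr)
  assume "\<not> a0 > 0"
  then have "a0 < 0" using a0_nonzero by linarith
  then have "c \<noteq> 0" by (auto simp: a0_def)
  consider "c > 0" | "c < 0" using \<open>c \<noteq> 0\<close> by linarith
  then show False
  proof cases
    case 1
    have "0 < f' 1 / a0" "0 < - (c * (1 - \<tau> * f' 1) / a0)"
      using f'_1 \<open>a0 < 0\<close> 1 one_minus_tau_f'_pos[of 1] by (simp_all add: divide_neg_neg divide_pos_neg)
    moreover have "(q_U \<longlongrightarrow> - (- (c * (1 - \<tau> * f' 1) / a0))) at_top" using q_U_tendsto(1) by simp
    ultimately obtain x where "U' x = 0 \<and> U'' x = 0"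
      using companion_unstable_vanishes[OF U'_deriv U''_deriv p_U_tendsto(1)]
        U'_tendsto_0(1) U''_tendsto_0(1) by blast
    then show False using U'_U''_no_common_zero by blast
  next
    case 2
    have "0 < f' 0 / a0" "0 < c * (1 - \<tau> * f' 0) / a0"
      using f'_0 \<open>a0 < 0\<close> 2 one_minus_tau_f'_pos[of 0] by (simp_all add: divide_neg_neg mult_neg_pos)
    moreover note reflected = companion_reflect[OF U'_deriv U''_deriv]
    moreover have "((\<lambda>t. p_U (- t)) \<longlongrightarrow> f' 0 / a0) at_top"
      "((\<lambda>t. - q_U (- t)) \<longlongrightarrow> - (c * (1 - \<tau> * f' 0) / a0)) at_top"
      "((\<lambda>t. U' (- t)) \<longlongrightarrow> 0) at_top" "((\<lambda>t. - U'' (- t)) \<longlongrightarrow> 0) at_top"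
      using p_U_tendsto(2) q_U_tendsto(2) U'_tendsto_0(2) U''_tendsto_0(2)
      by (auto simp: filterlim_at_bot_mirror intro: tendsto_minus_cancel_left[THEN iffD1])
    ultimately obtain x where "U' (- x) = 0 \<and> - U'' (- x) = 0"
      using companion_unstable_vanishes[of 0 "\<lambda>t. U' (- t)" "\<lambda>t. - U'' (- t)" "\<lambda>t. p_U (- t)"
          "\<lambda>t. - q_U (- t)" "f' 0 / a0" "c * (1 - \<tau> * f' 0) / a0"] by blast
    then show False using U'_U''_no_common_zero by simp
  qed
qed

section \<open>The bounded solution of the adjoint system\<close>

lemma q_U_antiderivative: "\<exists>F. \<forall>x. (F has_real_derivative q_U x) (at x)"
proof -
  have "\<exists>F. \<forall>x::real. - \<infinity> < x \<longrightarrow> x < \<infinity> \<longrightarrow> (F has_vector_derivative q_U x) (at x)"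
    by (rule einterval_antiderivative)
       (use continuous_q_U in \<open>auto simp: continuous_on_eq_continuous_at\<close>)
  then show ?thesis by (auto simp: has_real_derivative_iff_has_vector_derivative)
qed

text \<open>With the integrating factor \<open>W = exp (\<integral> q_U)\<close>, the pair \<open>(\<zeta>, \<eta>) = (- W U'', W U')\<close>
  solves the adjoint system; \<open>\<eta>'\<close> and \<open>\<eta>''\<close> are the derivatives of \<open>\<eta>\<close>.\<close>

definition "W x = exp ((SOME F. \<forall>x. (F has_real_derivative q_U x) (at x)) x)"

definition "eta x = W x * U' x"

definition "zeta x = - (W x * U'' x)"

definition "eta' x = q_U x * eta x - zeta x"

definition "q_U' x = - (c * \<tau> * a_U' x) / a0"

definition "eta'' x = q_U' x * eta x + q_U x * eta' x - p_U x * eta x"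

lemma W_deriv: "(W has_real_derivative q_U x * W x) (at x)"
proof -
  have "((SOME F. \<forall>x. (F has_real_derivative q_U x) (at x)) has_real_derivative q_U x) (at x)"
    using someI_ex[OF q_U_antiderivative] by blast
  then show ?thesis unfolding W_def[abs_def] by (auto intro!: derivative_eq_intros)
qed

lemma W_pos: "0 < W x" by (simp add: W_def)

lemma eta_deriv: "(eta has_real_derivative eta' x) (at x)"
proof -
  have "(eta has_real_derivative W x * U'' x + q_U x * W x * U' x) (at x)"
    unfolding eta_def[abs_def] by (auto intro!: derivative_eq_intros W_deriv U'_deriv)
  then show ?thesis by (simp add: eta'_def eta_def zeta_def algebra_simps)
qed

lemma zeta_deriv: "(zeta has_real_derivative p_U x * eta x) (at x)"
proof -
  have "(zeta has_real_derivative - (W x * (- (p_U x * U' x) - q_U x * U'' x) + q_U x * W x * U'' x)) (at x)"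
    unfolding zeta_def[abs_def] by (auto intro!: derivative_eq_intros W_deriv U''_deriv)
  then show ?thesis by (simp add: eta_def algebra_simps)
qed

lemma q_U_deriv: "(q_U has_real_derivative q_U' x) (at x)"
proof -
  have "((\<lambda>x. c * (1 - \<tau> * a_U x) / a0) has_real_derivative c * (- (\<tau> * a_U' x)) / a0) (at x)"
    using a0_nonzero by (auto intro!: derivative_eq_intros a_U_deriv)
  then show ?thesis unfolding q_U_def[abs_def] q_U'_def by (simp add: mult.assoc)
qed

lemma eta'_deriv: "(eta' has_real_derivative eta'' x) (at x)"
  unfolding eta'_def[abs_def] eta''_def
  by (auto intro!: derivative_eq_intros q_U_deriv eta_deriv zeta_deriv simp: eta'_def algebra_simps)

lemma continuous_eta: "continuous_on UNIV eta" and continuous_zeta: "continuous_on UNIV zeta"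
  and continuous_eta': "continuous_on UNIV eta'"
  using eta_deriv zeta_deriv eta'_deriv by (meson DERIV_continuous continuous_at_imp_continuous_on)+

lemma continuous_q_U': "continuous_on UNIV q_U'"
  unfolding q_U'_def[abs_def] using a0_nonzero by (intro continuous_intros continuous_a_U') auto

text \<open>At both ends \<open>p_U\<close> tends to \<open>f'(0) / a0\<close> resp. \<open>f'(1) / a0\<close>, which are negative because
  \<open>a0 > 0\<close>: the linearised equation has a saddle there.\<close>

lemma W_U'_U''_decay_at_top:
  "\<exists>K \<kappa> X. 0 < \<kappa> \<and> (\<forall>x\<ge>X. (W x * U' x)\<^sup>2 + (W x * U'' x)\<^sup>2 \<le> K * exp (- \<kappa> * x))"
  using companion_decay_weighted[OF U'_deriv U''_deriv W_deriv W_pos p_U_tendsto(1) q_U_tendsto(1) _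
      U'_tendsto_0(1) U''_tendsto_0(1)]
    f'_1 a0_pos by (simp add: divide_neg_pos)

lemma W_U'_U''_decay_at_bot:
  "\<exists>K \<kappa> X. 0 < \<kappa> \<and> (\<forall>x\<ge>X. (W (- x) * U' (- x))\<^sup>2 + (W (- x) * U'' (- x))\<^sup>2 \<le> K * exp (- \<kappa> * x))"
proof -
  have "((\<lambda>t. W (- t)) has_real_derivative (- q_U (- t)) * W (- t)) (at t)" for t
    using DERIV_chain2[OF W_deriv DERIV_minus[OF DERIV_ident]] by simp
  moreover have "((\<lambda>t. p_U (- t)) \<longlongrightarrow> f' 0 / a0) at_top"
    "((\<lambda>t. - q_U (- t)) \<longlongrightarrow> - (c * (1 - \<tau> * f' 0) / a0)) at_top"
    "((\<lambda>t. U' (- t)) \<longlongrightarrow> 0) at_top" "((\<lambda>t. - U'' (- t)) \<longlongrightarrow> 0) at_top"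
    using p_U_tendsto(2) q_U_tendsto(2) U'_tendsto_0(2) U''_tendsto_0(2)
    by (auto simp: filterlim_at_bot_mirror intro: tendsto_minus_cancel_left[THEN iffD1])
  moreover have "f' 0 / a0 < 0" using f'_0 a0_pos by (simp add: divide_neg_pos)
  ultimately show ?thesis
    using companion_decay_weighted[of 0 "\<lambda>t. U' (- t)" "\<lambda>t. - U'' (- t)" "\<lambda>t. p_U (- t)"
        "\<lambda>t. - q_U (- t)" "\<lambda>t. W (- t)"] companion_reflect[OF U'_deriv U''_deriv] W_pos
    by simp
qed

lemma exp_decaying_eta: "exp_decaying eta" and exp_decaying_zeta: "exp_decaying zeta"
proof -
  obtain K1 \<kappa>1 X1 where top: "0 < \<kappa>1" "\<And>x. X1 \<le> x \<Longrightarrow> (eta x)\<^sup>2 + (zeta x)\<^sup>2 \<le> K1 * exp (- \<kappa>1 * x)"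
    using W_U'_U''_decay_at_top unfolding eta_def zeta_def by auto
  obtain K2 \<kappa>2 X2 where bot: "0 < \<kappa>2"
    "\<And>x. X2 \<le> x \<Longrightarrow> (eta (- x))\<^sup>2 + (zeta (- x))\<^sup>2 \<le> K2 * exp (- \<kappa>2 * x)"
    using W_U'_U''_decay_at_bot unfolding eta_def zeta_def by auto
  have "(eta x)\<^sup>2 \<le> K1 * exp (- \<kappa>1 * x)" "(zeta x)\<^sup>2 \<le> K1 * exp (- \<kappa>1 * x)" if "X1 \<le> x" for x
    using top(2)[OF that] zero_le_power2[of "eta x"] zero_le_power2[of "zeta x"] by linarith+
  moreover have "(eta (- x))\<^sup>2 \<le> K2 * exp (- \<kappa>2 * x)" "(zeta (- x))\<^sup>2 \<le> K2 * exp (- \<kappa>2 * x)"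
    if "X2 \<le> x" for x
    using bot(2)[OF that] zero_le_power2[of "eta (- x)"] zero_le_power2[of "zeta (- x)"] by linarith+
  ultimately show "exp_decaying eta" "exp_decaying zeta"
    using exp_decaying_if_sq_decay_at_both_ends[OF continuous_eta]
      exp_decaying_if_sq_decay_at_both_ends[OF continuous_zeta] top(1) bot(1) by blast+
qed

definition "y0 x = (\<chi> i::2. if i = 1 then complex_of_real (zeta x) else complex_of_real (eta x))"

lemma y0_nth: "y0 x $ 1 = complex_of_real (zeta x)" "y0 x $ 2 = complex_of_real (eta x)"
  by (simp_all add: y0_def)

lemma coef_a_eq: "coef_a f U = a_U"
  by (rule ext) (simp add: coef_a_def a_U_def f'_def)

lemma deriv_coef_a: "deriv (coef_a f U) x = a_U' x"
  unfolding coef_a_eq using a_U_deriv by (rule DERIV_imp_deriv)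

lemma A_mat_nth:
  "A_mat f \<tau> c U x $ 1 $ 1 = 0" "A_mat f \<tau> c U x $ 1 $ 2 = 1"
  "A_mat f \<tau> c U x $ 2 $ 1 = - complex_of_real (p_U x)" "A_mat f \<tau> c U x $ 2 $ 2 = - complex_of_real (q_U x)"
proof -
  have "A_mat f \<tau> c U x $ i $ j = (1 / a0) *\<^sub>R complex_of_real
        (if i = 1 then (if j = 1 then 0 else a0)
         else (if j = 1 then c * \<tau> * a_U' x - a_U x else c * (\<tau> * a_U x - 1)))" for i j
    unfolding A_mat_def deriv_coef_a unfolding coef_a_eq a0_def[symmetric] by simp
  then have entry: "A_mat f \<tau> c U x $ i $ j = complex_of_real ((1 / a0) *
        (if i = 1 then (if j = 1 then 0 else a0)
         else (if j = 1 then c * \<tau> * a_U' x - a_U x else c * (\<tau> * a_U x - 1))))" for i j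
    by (simp only: scaleR_conv_of_real of_real_mult)
  have "(1 / a0) * (c * \<tau> * a_U' x - a_U x) = - p_U x" "(1 / a0) * (c * (\<tau> * a_U x - 1)) = - q_U x"
    using a0_nonzero by (simp_all add: p_U_def q_U_def field_simps)
  then show "A_mat f \<tau> c U x $ 1 $ 1 = 0" "A_mat f \<tau> c U x $ 1 $ 2 = 1"
    "A_mat f \<tau> c U x $ 2 $ 1 = - complex_of_real (p_U x)" "A_mat f \<tau> c U x $ 2 $ 2 = - complex_of_real (q_U x)"
    using entry[of 1 1] entry[of 1 2] entry[of 2 1] entry[of 2 2] a0_nonzero by simp_all
qed

lemma conj_transpose_A_mat_mult:
  fixes v :: "complex ^ 2"
  shows "(conj_transpose (A_mat f \<tau> c U x) *v v) $ 1 = - complex_of_real (p_U x) * v $ 2"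
    and "(conj_transpose (A_mat f \<tau> c U x) *v v) $ 2 = v $ 1 - complex_of_real (q_U x) * v $ 2"
  unfolding conj_transpose_def matrix_vector_mult_def by (simp_all add: sum_2 A_mat_nth)

lemma adjoint_sol_iff:
  "adjoint_sol f \<tau> c U y \<longleftrightarrow>
    (\<forall>x. ((\<lambda>t. y t $ 1) has_vector_derivative complex_of_real (p_U x) * y x $ 2) (at x) \<and>
         ((\<lambda>t. y t $ 2) has_vector_derivative - y x $ 1 + complex_of_real (q_U x) * y x $ 2) (at x))"
proof -
  have "(y has_vector_derivative D) (at x) \<longleftrightarrow> (\<forall>i. ((\<lambda>t. y t $ i) has_vector_derivative D $ i) (at x))"
    for x D
    using bounded_linear.has_vector_derivative[OF bounded_linear_vec_nth, of y D "at x"]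
      has_vector_derivative_componentwise[of y D x] by blast
  then show ?thesis unfolding adjoint_sol_def by (simp add: forall_2 conj_transpose_A_mat_mult)
qed

lemma y0_adjoint_sol: "adjoint_sol f \<tau> c U y0"
proof -
  have "((\<lambda>t. complex_of_real (zeta t)) has_vector_derivative complex_of_real (p_U x * eta x)) (at x)"
    "((\<lambda>t. complex_of_real (eta t)) has_vector_derivative complex_of_real (eta' x)) (at x)" for x
    by (rule has_vector_derivative_of_real[OF zeta_deriv] has_vector_derivative_of_real[OF eta_deriv])+
  then show ?thesis unfolding adjoint_sol_iff y0_nth by (simp add: eta'_def)
qed

lemma exp_decaying_y0: "exp_decaying y0"
  unfolding y0_def[abs_def]
  by (intro exp_decaying_vec2 exp_decaying_of_real exp_decaying_eta exp_decaying_zeta)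

lemma eta_nonzero: "(\<lambda>x. y0 x $ 2) \<noteq> (\<lambda>x. 0)"
proof
  assume "(\<lambda>x. y0 x $ 2) = (\<lambda>x. 0)"
  then have eta0: "eta x = 0" for x by (metis y0_nth(2) of_real_eq_0_iff)
  have "U' x = 0" for x using eta0[of x] W_pos[of x] by (simp add: eta_def)
  then show False using U'_not_identically_zero by blast
qed

section \<open>Uniqueness of bounded solutions\<close>

text \<open>The pairing is constant because \<open>(U', U'')\<close> solves the system adjoint to this one.\<close>

lemma adjoint_pairing_constant:
  fixes z1 z2 :: "real \<Rightarrow> complex"
  assumes d1: "\<And>x. (z1 has_vector_derivative complex_of_real (p_U x) * z2 x) (at x)"
    and d2: "\<And>x. (z2 has_vector_derivative - z1 x + complex_of_real (q_U x) * z2 x) (at x)"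
  obtains C where "\<And>x. complex_of_real (U' x) * z1 x + complex_of_real (U'' x) * z2 x = C"
proof -
  have deriv0: "((\<lambda>t. complex_of_real (U' t) * z1 t + complex_of_real (U'' t) * z2 t) has_vector_derivative 0) (at x)"
    for x
  proof -
    have "((\<lambda>t. complex_of_real (U' t) * z1 t + complex_of_real (U'' t) * z2 t) has_vector_derivative
        (complex_of_real (U' x) * (complex_of_real (p_U x) * z2 x) + complex_of_real (U'' x) * z1 x) +
        (complex_of_real (U'' x) * (- z1 x + complex_of_real (q_U x) * z2 x) +
         complex_of_real (- (p_U x * U' x) - q_U x * U'' x) * z2 x)) (at x)"
      by (intro has_vector_derivative_add has_vector_derivative_mult has_vector_derivative_of_real
          d1 d2 U'_deriv U''_deriv)
    then show ?thesis by (simp add: algebra_simps)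
  qed
  obtain C where "\<And>x. x \<in> UNIV \<Longrightarrow> complex_of_real (U' x) * z1 x + complex_of_real (U'' x) * z2 x = C"
    using has_vector_derivative_zero_constant[OF convex_UNIV deriv0] by blast
  then show ?thesis using that by blast
qed

lemma adjoint_sol_proportional:
  fixes z1 z2 :: "real \<Rightarrow> complex"
  assumes d1: "\<And>x. (z1 has_vector_derivative complex_of_real (p_U x) * z2 x) (at x)"
    and d2: "\<And>x. (z2 has_vector_derivative - z1 x + complex_of_real (q_U x) * z2 x) (at x)"
    and pairing: "\<And>x. complex_of_real (U' x) * z1 x + complex_of_real (U'' x) * z2 x = 0"
  shows "\<exists>k. \<forall>x. z1 x = k * complex_of_real (zeta x) \<and> z2 x = k * complex_of_real (eta x)"
proof -
  obtain x0 where "U' x0 \<noteq> 0" using U'_not_identically_zero by blast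
  then have "eta x0 \<noteq> 0" using W_pos[of x0] by (simp add: eta_def)
  define k where "k = z2 x0 / complex_of_real (eta x0)"
  define w1 where "w1 t = z1 t - k * complex_of_real (zeta t)" for t
  define w2 where "w2 t = z2 t - k * complex_of_real (eta t)" for t
  have "(w1 has_vector_derivative complex_of_real 0 * w1 x + complex_of_real (p_U x) * w2 x) (at x)" for x
  proof -
    have "(w1 has_vector_derivative complex_of_real (p_U x) * z2 x - k * complex_of_real (p_U x * eta x)) (at x)"
      unfolding w1_def[abs_def]
      by (intro has_vector_derivative_diff d1 has_vector_derivative_mult_right has_vector_derivative_of_real zeta_deriv)
    then show ?thesis by (simp add: w2_def algebra_simps)
  qed
  moreover have "(w2 has_vector_derivative complex_of_real (- 1) * w1 x + complex_of_real (q_U x) * w2 x) (at x)" for x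
  proof -
    have "(w2 has_vector_derivative (- z1 x + complex_of_real (q_U x) * z2 x) - k * complex_of_real (eta' x)) (at x)"
      unfolding w2_def[abs_def]
      by (intro has_vector_derivative_diff d2 has_vector_derivative_mult_right has_vector_derivative_of_real eta_deriv)
    then show ?thesis by (simp add: w1_def w2_def eta'_def algebra_simps)
  qed
  moreover have "w2 x0 = 0" using \<open>eta x0 \<noteq> 0\<close> by (simp add: w2_def k_def)
  moreover have "w1 x0 = 0"
  proof -
    have "z1 x0 = - complex_of_real (U'' x0) * z2 x0 / complex_of_real (U' x0)"
      using pairing[of x0] \<open>U' x0 \<noteq> 0\<close> by (simp add: field_simps add_eq_0_iff)
    moreover have "k * complex_of_real (zeta x0) = - complex_of_real (U'' x0) * z2 x0 / complex_of_real (U' x0)"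
      using \<open>U' x0 \<noteq> 0\<close> W_pos[of x0] unfolding k_def zeta_def eta_def by (simp add: field_simps)
    ultimately show ?thesis by (simp add: w1_def)
  qed
  moreover have "continuous_on UNIV (\<lambda>_. 0 :: real)" "continuous_on UNIV (\<lambda>_. - 1 :: real)"
    by (rule continuous_on_const)+
  ultimately have "w1 x = 0 \<and> w2 x = 0" for x
    using linear_system_vanishes[of w1 "\<lambda>_. 0" p_U w2 "\<lambda>_. - 1" q_U x0 x]
      continuous_p_U continuous_q_U by blast
  then show ?thesis by (auto simp: w1_def w2_def)
qed

lemma pairing_tendsto_zero:
  fixes z1 z2 :: "real \<Rightarrow> complex"
  assumes "\<And>x. norm (z1 x) \<le> M1" "\<And>x. norm (z2 x) \<le> M2"
  shows "((\<lambda>x. complex_of_real (U' x) * z1 x + complex_of_real (U'' x) * z2 x) \<longlongrightarrow> 0) at_top"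
proof (rule Lim_null_comparison)
  show "\<forall>\<^sub>F x in at_top. norm (complex_of_real (U' x) * z1 x + complex_of_real (U'' x) * z2 x)
      \<le> \<bar>U' x\<bar> * M1 + \<bar>U'' x\<bar> * M2"
  proof (intro always_eventually allI)
    fix x
    have "norm (complex_of_real (U' x) * z1 x + complex_of_real (U'' x) * z2 x)
        \<le> \<bar>U' x\<bar> * norm (z1 x) + \<bar>U'' x\<bar> * norm (z2 x)"
      using norm_triangle_ineq[of "complex_of_real (U' x) * z1 x" "complex_of_real (U'' x) * z2 x"]
      by (simp add: norm_mult)
    also have "\<dots> \<le> \<bar>U' x\<bar> * M1 + \<bar>U'' x\<bar> * M2"
      using assms by (intro add_mono mult_left_mono) auto
    finally show "norm (complex_of_real (U' x) * z1 x + complex_of_real (U'' x) * z2 x)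
        \<le> \<bar>U' x\<bar> * M1 + \<bar>U'' x\<bar> * M2" .
  qed
  show "((\<lambda>x. \<bar>U' x\<bar> * M1 + \<bar>U'' x\<bar> * M2) \<longlongrightarrow> 0) at_top"
    using tendsto_add[OF tendsto_mult_right[OF tendsto_rabs[OF U'_tendsto_0(1)]]
        tendsto_mult_right[OF tendsto_rabs[OF U''_tendsto_0(1)]]] by simp
qed

lemma adjoint_sol_unique:
  assumes "adjoint_sol f \<tau> c U y" "bounded (range y)"
  shows "\<exists>k::complex. \<forall>x. y x = k *s y0 x"
proof -
  note d = assms(1)[unfolded adjoint_sol_iff, rule_format]
  obtain C where C: "\<And>x. complex_of_real (U' x) * y x $ 1 + complex_of_real (U'' x) * y x $ 2 = C"
    using adjoint_pairing_constant[of "\<lambda>t. y t $ 1" "\<lambda>t. y t $ 2"] d by metis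
  obtain M where M: "\<And>x. norm (y x) \<le> M" using assms(2) by (auto simp: bounded_iff)
  have "norm (y x $ i) \<le> M" for x i by (rule order_trans[OF Finite_Cartesian_Product.norm_nth_le M])
  then have "((\<lambda>x::real. C) \<longlongrightarrow> 0) at_top"
    using pairing_tendsto_zero[of "\<lambda>t. y t $ 1" M "\<lambda>t. y t $ 2" M] C by simp
  then have "C = 0" using tendsto_const_iff[OF trivial_limit_at_top_linorder] by blast
  then obtain k where "\<And>x. y x $ 1 = k * complex_of_real (zeta x) \<and> y x $ 2 = k * complex_of_real (eta x)"
    using adjoint_sol_proportional[of "\<lambda>t. y t $ 1" "\<lambda>t. y t $ 2"] d C by blast
  then have "y x = k *s y0 x" for x by (simp add: vec_eq_iff forall_2 y0_nth)
  then show ?thesis by blast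
qed

lemma coef_a0_eq: "coef_a0 \<tau> c = a0"
  by (simp add: coef_a0_def a0_def)

lemma coef_a1_eq: "coef_a1 f \<tau> c U = (\<lambda>x. a0 * q_U x)"
  by (rule ext) (use a0_nonzero in \<open>simp add: coef_a1_def coef_a_eq q_U_def\<close>)

lemma deriv_coef_a1: "deriv (coef_a1 f \<tau> c U) x = a0 * q_U' x"
  unfolding coef_a1_eq by (rule DERIV_imp_deriv) (auto intro!: derivative_eq_intros q_U_deriv)

lemma coef_a2_eq: "coef_a2 f \<tau> c U x = a0 * p_U x"
  unfolding coef_a2_def deriv_coef_a unfolding coef_a_eq using a0_nonzero by (simp add: p_U_def)

lemma Astar_equation_iff:
  "complex_of_real (coef_a0 \<tau> c) * e2 - complex_of_real (coef_a1 f \<tau> c U x) * e1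
      + complex_of_real (coef_a2 f \<tau> c U x - deriv (coef_a1 f \<tau> c U) x) * e = 0
   \<longleftrightarrow> e2 = complex_of_real (q_U x) * e1 - complex_of_real (p_U x) * e + complex_of_real (q_U' x) * e"
proof -
  have "complex_of_real (coef_a0 \<tau> c) * e2 - complex_of_real (coef_a1 f \<tau> c U x) * e1
      + complex_of_real (coef_a2 f \<tau> c U x - deriv (coef_a1 f \<tau> c U) x) * e
      = complex_of_real a0 * (e2 - (complex_of_real (q_U x) * e1 - complex_of_real (p_U x) * e
          + complex_of_real (q_U' x) * e))"
    unfolding coef_a0_eq deriv_coef_a1 unfolding coef_a1_eq coef_a2_eq by (simp add: algebra_simps)
  then show ?thesis using a0_nonzero by simp
qed

lemma q_U_bounded: "\<exists>B. \<forall>x. \<bar>q_U x\<bar> \<le> B"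
  by (rule bounded_if_tendsto_at_top_at_bot[OF continuous_q_U q_U_tendsto])

lemma p_U_bounded: "\<exists>B. \<forall>x. \<bar>p_U x\<bar> \<le> B"
  by (rule bounded_if_tendsto_at_top_at_bot[OF continuous_p_U p_U_tendsto])

lemma q_U'_bounded: "\<exists>B. \<forall>x. \<bar>q_U' x\<bar> \<le> B"
proof (rule bounded_if_tendsto_at_top_at_bot[OF continuous_q_U'])
  show "(q_U' \<longlongrightarrow> - (c * \<tau> * 0) / a0) at_top" "(q_U' \<longlongrightarrow> - (c * \<tau> * 0) / a0) at_bot"
    unfolding q_U'_def[abs_def] by (intro tendsto_intros a0_nonzero a_U'_tendsto_0)+
qed

text \<open>For a solution of \<open>\<A>\<^sup>*\<eta> = 0\<close> only \<open>\<eta>\<close> is assumed bounded, not \<open>\<eta>'\<close>. If the pairing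
  \<open>C\<close> were nonzero, then \<open>U' \<eta>' \<approx> - C\<close> near \<open>+\<infinity>\<close> with \<open>U' \<rightarrow> 0\<close> of constant sign, so
  \<open>Re (conj C \<eta>)\<close> would grow at least linearly.\<close>

lemma pairing_vanishes_if_bounded:
  fixes \<eta> \<eta>1 :: "real \<Rightarrow> complex"
  assumes d: "\<And>x. (\<eta> has_vector_derivative \<eta>1 x) (at x)" and bound: "\<And>x. norm (\<eta> x) \<le> M"
    and pairing: "\<And>x. complex_of_real (U' x) * (complex_of_real (q_U x) * \<eta> x - \<eta>1 x)
        + complex_of_real (U'' x) * \<eta> x = C"
  shows "C = 0"
proof (rule ccontr)
  assume "C \<noteq> 0"
  define D where "D x = complex_of_real (U' x) * (complex_of_real (q_U x) * \<eta> x) + complex_of_real (U'' x) * \<eta> x"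
    for x
  have U'_\<eta>1: "complex_of_real (U' x) * \<eta>1 x = D x - C" for x
    using pairing[of x] by (simp add: D_def algebra_simps)
  obtain Bq where Bq: "\<And>x. \<bar>q_U x\<bar> \<le> Bq" using q_U_bounded by blast
  have "norm (complex_of_real (q_U x) * \<eta> x) \<le> Bq * M" for x
    using Bq[of x] bound[of x] by (simp add: norm_mult mult_mono)
  then have "(D \<longlongrightarrow> 0) at_top" unfolding D_def[abs_def] using bound by (rule pairing_tendsto_zero)
  then have "((\<lambda>x. norm (D x)) \<longlongrightarrow> 0) at_top" using tendsto_norm by fastforce
  then have "\<forall>\<^sub>F x in at_top. norm (D x) < norm C / 2"
    using \<open>C \<noteq> 0\<close> by (intro order_tendstoD(2)) auto
  moreover have "\<forall>\<^sub>F x in at_top. \<bar>U' x\<bar> < 1"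
    using order_tendstoD(2)[OF tendsto_rabs[OF U'_tendsto_0(1)], of 1] by simp
  ultimately have "\<forall>\<^sub>F x in at_top. norm (D x) < norm C / 2 \<and> \<bar>U' x\<bar> < 1"
    by (rule eventually_conj)
  then obtain X where X: "\<And>x. X \<le> x \<Longrightarrow> norm (D x) < norm C / 2 \<and> \<bar>U' x\<bar> < 1"
    by (auto simp: eventually_at_top_linorder)
  have U'_nonzero: "U' x \<noteq> 0" if "X \<le> x" for x
  proof
    assume "U' x = 0"
    then have "D x = C" using U'_\<eta>1[of x] by simp
    then show False using X[OF that] \<open>C \<noteq> 0\<close> by simp
  qed
  define s where "s = sgn (U' X)"
  have "\<bar>s\<bar> = 1" using U'_nonzero[of X] by (simp add: s_def sgn_real_def)
  have "(norm C)\<^sup>2 / 2 \<le> s * Re (cnj (- C) * \<eta>1 t)" if "X \<le> t" for t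
  proof (rule Re_cnj_mult_lower_bound[OF U'_\<eta>1 _ _ _ \<open>\<bar>s\<bar> = 1\<close> \<open>C \<noteq> 0\<close>])
    show "0 < s * U' t"
      using nonvanishing_sign_constant[OF continuous_U' U'_nonzero that] by (simp add: s_def)
    have "\<bar>s * U' t\<bar> < 1" using X[OF that] \<open>\<bar>s\<bar> = 1\<close> by (simp add: abs_mult)
    then show "s * U' t \<le> 1" by linarith
  qed (use X[OF that] in simp)
  moreover have "((\<lambda>t. s * Re (cnj (- C) * \<eta> t)) has_real_derivative s * Re (cnj (- C) * \<eta>1 t)) (at t)" for t
    by (intro DERIV_cmult has_field_derivative_Re has_vector_derivative_mult_right d)
  moreover have "\<bar>s * Re (cnj (- C) * \<eta> t)\<bar> \<le> norm C * M" for t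
  proof -
    have "\<bar>s * Re (cnj (- C) * \<eta> t)\<bar> = \<bar>Re (cnj (- C) * \<eta> t)\<bar>"
      using \<open>\<bar>s\<bar> = 1\<close> by (simp only: abs_mult mult_1)
    also have "\<dots> \<le> norm (cnj (- C) * \<eta> t)" by (rule abs_Re_le_cmod)
    also have "\<dots> \<le> norm C * M" using bound[of t] by (simp add: norm_mult mult_left_mono)
    finally show ?thesis .
  qed
  ultimately show False
    using bounded_not_linear_growth[of "\<lambda>t. s * Re (cnj (- C) * \<eta> t)" "\<lambda>t. s * Re (cnj (- C) * \<eta>1 t)" X
        "(norm C)\<^sup>2 / 2"] \<open>C \<noteq> 0\<close> by auto
qed

lemma Astar_sol_unique:
  assumes "Astar_sol f \<tau> c U \<eta>" "bounded (range \<eta>)"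
  shows "\<exists>k::complex. \<forall>x. \<eta> x = k * y0 x $ 2"
proof -
  obtain \<eta>1 \<eta>2 where d1: "\<And>x. (\<eta> has_vector_derivative \<eta>1 x) (at x)"
    and d2: "\<And>x. (\<eta>1 has_vector_derivative \<eta>2 x) (at x)"
    and eq: "\<And>x. \<eta>2 x = complex_of_real (q_U x) * \<eta>1 x - complex_of_real (p_U x) * \<eta> x
        + complex_of_real (q_U' x) * \<eta> x"
    using assms(1) unfolding Astar_sol_def Astar_equation_iff by blast
  define z1 where "z1 t = complex_of_real (q_U t) * \<eta> t - \<eta>1 t" for t
  have dz1: "(z1 has_vector_derivative complex_of_real (p_U x) * \<eta> x) (at x)" for x
  proof -
    have "(z1 has_vector_derivative
        (complex_of_real (q_U x) * \<eta>1 x + complex_of_real (q_U' x) * \<eta> x) - \<eta>2 x) (at x)"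
      unfolding z1_def[abs_def]
      by (intro has_vector_derivative_diff has_vector_derivative_mult has_vector_derivative_of_real
          q_U_deriv d1 d2)
    then show ?thesis by (simp add: eq algebra_simps)
  qed
  have dz2: "(\<eta> has_vector_derivative - z1 x + complex_of_real (q_U x) * \<eta> x) (at x)" for x
    using d1[of x] by (simp add: z1_def)
  obtain C where C: "\<And>x. complex_of_real (U' x) * z1 x + complex_of_real (U'' x) * \<eta> x = C"
    using adjoint_pairing_constant[OF dz1 dz2] by blast
  obtain M where "\<And>x. norm (\<eta> x) \<le> M" using assms(2) by (auto simp: bounded_iff)
  then have "C = 0" by (rule pairing_vanishes_if_bounded[OF d1]) (use C in \<open>simp add: z1_def\<close>)
  then obtain k where "\<And>x. z1 x = k * complex_of_real (zeta x) \<and> \<eta> x = k * complex_of_real (eta x)"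
    using adjoint_sol_proportional[OF dz1 dz2] C by blast
  then show ?thesis by (auto simp: y0_nth)
qed

section \<open>Sobolev regularity\<close>

lemma exp_decaying_eta': "exp_decaying eta'"
proof -
  obtain Bq where "\<And>x. \<bar>q_U x\<bar> \<le> Bq" using q_U_bounded by blast
  then have "exp_decaying (\<lambda>x. q_U x *\<^sub>R eta x + (- 1) *\<^sub>R zeta x)"
    by (intro exp_decaying_add exp_decaying_scale[OF exp_decaying_eta continuous_q_U]
        exp_decaying_scale[OF exp_decaying_zeta, of _ 1]) auto
  then show ?thesis by (simp add: eta'_def[abs_def])
qed

lemma exp_decaying_p_U_eta: "exp_decaying (\<lambda>x. p_U x * eta x)"
proof -
  obtain Bp where "\<And>x. \<bar>p_U x\<bar> \<le> Bp" using p_U_bounded by blast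
  then show ?thesis using exp_decaying_scale[OF exp_decaying_eta continuous_p_U] by auto
qed

lemma exp_decaying_eta'': "exp_decaying eta''"
proof -
  obtain Bq where "\<And>x. \<bar>q_U x\<bar> \<le> Bq" using q_U_bounded by blast
  moreover obtain Bq' where "\<And>x. \<bar>q_U' x\<bar> \<le> Bq'" using q_U'_bounded by blast
  ultimately have "exp_decaying (\<lambda>x. (q_U' x *\<^sub>R eta x + q_U x *\<^sub>R eta' x) + (- 1) *\<^sub>R (p_U x * eta x))"
    by (intro exp_decaying_add exp_decaying_scale[OF exp_decaying_eta continuous_q_U']
        exp_decaying_scale[OF exp_decaying_eta' continuous_q_U] exp_decaying_scale[OF exp_decaying_p_U_eta, of _ 1])
      auto
  then show ?thesis by (simp add: eta''_def[abs_def])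
qed

lemma Astar_sol_eta: "Astar_sol f \<tau> c U (\<lambda>x. y0 x $ 2)"
  unfolding Astar_sol_def y0_nth Astar_equation_iff
proof (intro exI allI conjI)
  fix x
  show "((\<lambda>x. complex_of_real (eta x)) has_vector_derivative complex_of_real (eta' x)) (at x)"
    "((\<lambda>x. complex_of_real (eta' x)) has_vector_derivative complex_of_real (eta'' x)) (at x)"
    by (rule has_vector_derivative_of_real[OF eta_deriv] has_vector_derivative_of_real[OF eta'_deriv])+
  show "complex_of_real (eta'' x) = complex_of_real (q_U x) * complex_of_real (eta' x)
      - complex_of_real (p_U x) * complex_of_real (eta x) + complex_of_real (q_U' x) * complex_of_real (eta x)"
    by (simp add: eta''_def algebra_simps)
qed

lemma H2_eta: "H2 (\<lambda>x. y0 x $ 2)"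
  unfolding H2_def y0_nth
proof (intro conjI exI)
  show "L2 (\<lambda>x. complex_of_real (eta x))" "L2 (\<lambda>x. complex_of_real (eta' x))"
    "L2 (\<lambda>x. complex_of_real (eta'' x))"
    by (intro exp_decaying_L2 exp_decaying_of_real exp_decaying_eta exp_decaying_eta' exp_decaying_eta'')+
  show "weak_deriv (\<lambda>x. complex_of_real (eta x)) (\<lambda>x. complex_of_real (eta' x))"
    by (rule weak_deriv_if_has_vector_derivative[OF has_vector_derivative_of_real[OF eta_deriv]])
       (intro continuous_intros continuous_eta')
  show "weak_deriv (\<lambda>x. complex_of_real (eta' x)) (\<lambda>x. complex_of_real (eta'' x))"
    by (rule weak_deriv_if_has_vector_derivative[OF has_vector_derivative_of_real[OF eta'_deriv]])
       (use exp_decaying_eta'' in \<open>auto simp: exp_decaying_def intro!: continuous_intros\<close>)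
qed

lemma H1_y0: "H1 y0"
proof -
  define y0' where "y0' x = (\<chi> i::2. if i = 1 then complex_of_real (p_U x * eta x) else complex_of_real (eta' x))"
    for x
  have "(y0 has_vector_derivative y0' x) (at x)" for x
  proof (rule has_vector_derivative_componentwise)
    fix i :: 2
    have "((\<lambda>t. complex_of_real (zeta t)) has_vector_derivative complex_of_real (p_U x * eta x)) (at x)"
      "((\<lambda>t. complex_of_real (eta t)) has_vector_derivative complex_of_real (eta' x)) (at x)"
      by (rule has_vector_derivative_of_real[OF zeta_deriv] has_vector_derivative_of_real[OF eta_deriv])+
    then show "((\<lambda>t. y0 t $ i) has_vector_derivative y0' x $ i) (at x)"
      using exhaust_2[of i] by (auto simp: y0_nth y0'_def)
  qed
  moreover have "exp_decaying y0'"
    unfolding y0'_def[abs_def]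
    by (intro exp_decaying_vec2 exp_decaying_of_real exp_decaying_p_U_eta exp_decaying_eta')
  ultimately show ?thesis
    unfolding H1_def using exp_decaying_L2[OF exp_decaying_y0] exp_decaying_L2
      weak_deriv_if_has_vector_derivative exp_decaying_def by blast
qed

end

theorem corollary3p8:
  fixes f U V :: "real \<Rightarrow> real" and \<tau> c :: real
  assumes "smooth_fun f" and "bistable f"
    and "0 < \<tau>" and "\<tau> < tau_m f"
    and "traveling_wave f \<tau> c U V"
  shows "\<exists>y0 :: real \<Rightarrow> complex^2.
     adjoint_sol f \<tau> c U y0 \<and> bounded (range y0) \<and> y0 \<noteq> (\<lambda>x. 0) \<and>
     (\<forall>y. adjoint_sol f \<tau> c U y \<and> bounded (range y) \<longrightarrow> (\<exists>k::complex. \<forall>x. y x = k *s y0 x)) \<and>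
     H1 y0 \<and>
     H2 (\<lambda>x. y0 x $ 2) \<and>
     Astar_sol f \<tau> c U (\<lambda>x. y0 x $ 2) \<and> bounded (range (\<lambda>x. y0 x $ 2)) \<and>
     (\<lambda>x. y0 x $ 2) \<noteq> (\<lambda>x. 0) \<and>
     (\<forall>\<eta>. Astar_sol f \<tau> c U \<eta> \<and> bounded (range \<eta>) \<longrightarrow>
        (\<exists>k::complex. \<forall>x. \<eta> x = k * y0 x $ 2))"
proof -
  interpret bistable_wave f U V \<tau> c using assms by unfold_locales
  have "bounded (range y0)" by (rule exp_decaying_bounded[OF exp_decaying_y0])
  moreover have "bounded (range (\<lambda>x. y0 x $ 2))"
    unfolding y0_nth by (rule exp_decaying_bounded[OF exp_decaying_of_real[OF exp_decaying_eta]])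
  moreover have "y0 \<noteq> (\<lambda>x. 0)" using eta_nonzero by auto
  ultimately show ?thesis
    using y0_adjoint_sol adjoint_sol_unique H1_y0 H2_eta Astar_sol_eta eta_nonzero Astar_sol_unique
    by blast
qed

end
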